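(* For all partial Boolean functions $f:D\to\{0,1\}$ with $D\subseteq\{0,1\}^n$, we have $\mathrm{QS}(f)\le \mathrm{QSZK}(f)$.
   Context: Query model: for $x\in\{0,1\}^n$ the quantum oracle $O_x$ acts by $O_x|i,b\rangle=|i,b\oplus x_i\rangle$ for $i\in[n]$, $b\in\{0,1\}$ (tensored with the identity on other registers). A $T$-query quantum algorithm is given by input-independent unitaries $U_0,\dots,U_T$ on $m$ qubits. On input $x$ it prepares $|\psi_x\rangle=U_TO_xU_{T-1}O_x\cdots U_1O_xU_0|0^m\rangle$, and it may output the mixed state obtained by tracing out a fixed subset of the qubits. The trace distance is $\|\rho-\sigma\|_{tr}=\tfrac12\|\rho-\sigma\|_1$. $\mathrm{QS}(f)$ is the smallest $k$ such that some $k$-query quantum algorithm, on each input $x\in D$, outputs a state $\rho_x$ with $\|\rho_x-\rho_y\|_{tr}\ge 1/6$ whenever $x,y\in D$ and $f(x)\ne f(y)$. $\mathrm{QSZK}(f)$ is the smallest $k$ such that there exist two quantum query algorithms, making $k$ queries in total, that on input $x\in D$ output states $\rho_x$ and $\sigma_x$ of the same dimension satisfying: - $\|\rho_x-\sigma_x\|_{tr}\ge 2/3$ for all $x\in D$ with $f(x)=1$; - $\|\rho_x-\sigma_x\|_{tr}\le 1/3$ for all $x\in D$ with $f(x)=0$. *)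

theory Defs
  imports "Jordan_Normal_Form.Char_Poly" "HOL-Library.Extended_Nat"
begin

definition adj :: "complex mat \<Rightarrow> complex mat" where
  "adj A = mat (dim_col A) (dim_row A) (\<lambda>(i,j). cnj (A $$ (j,i)))"

definition unitary :: "nat \<Rightarrow> complex mat \<Rightarrow> bool" where
  "unitary d U \<longleftrightarrow> U \<in> carrier_mat d d \<and> adj U * U = 1\<^sub>m d"

text \<open>Schatten 1-norm: sum of the singular values of A, i.e. the sum of the square roots
  of the eigenvalues (with algebraic multiplicity) of the PSD matrix A^* A.\<close>
definition schatten1 :: "complex mat \<Rightarrow> real" where
  "schatten1 A = (let P = char_poly (adj A * A) in
      \<Sum>\<mu>\<in>{\<mu>. poly P \<mu> = 0}. real (order \<mu> P) * sqrt (Re \<mu>))"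

definition trace_dist :: "complex mat \<Rightarrow> complex mat \<Rightarrow> real" where
  "trace_dist \<rho> \<sigma> = schatten1 (\<rho> - \<sigma>) / 2"

text \<open>Computational basis states of m qubits are indexed by s < 2^m; qubit j of s is bit j.\<close>
definition qbit :: "nat \<Rightarrow> nat \<Rightarrow> bool" where
  "qbit s j \<longleftrightarrow> odd (s div 2 ^ j)"

definition idx_qubits :: "nat \<Rightarrow> nat" where
  "idx_qubits n = (LEAST q. n \<le> 2 ^ q)"

text \<open>Query register layout: qubits 0..q-1 hold the index i (binary), qubit q holds b,
  all other qubits are untouched by the query_op. Basis states whose index register
  holds a value i >= n are left unchanged.\<close>
definition query_perm :: "nat \<Rightarrow> bool list \<Rightarrow> nat \<Rightarrow> nat" where
  "query_perm n x s = (let q = idx_qubits n; i = s mod 2 ^ q in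
      if i < n \<and> x ! i then (if qbit s q then s - 2 ^ q else s + 2 ^ q) else s)"

definition query_op :: "nat \<Rightarrow> nat \<Rightarrow> bool list \<Rightarrow> complex mat" where
  "query_op n m x = mat (2 ^ m) (2 ^ m) (\<lambda>(r,c). if r = query_perm n x c then 1 else 0)"

fun evolve :: "nat \<Rightarrow> nat \<Rightarrow> bool list \<Rightarrow> complex mat list \<Rightarrow> complex vec \<Rightarrow> complex vec" where
  "evolve n m x [] v = v"
| "evolve n m x (U # Us) v = evolve n m x Us (U *\<^sub>v (query_op n m x *\<^sub>v v))"

definition final_state :: "nat \<Rightarrow> nat \<Rightarrow> complex mat list \<Rightarrow> bool list \<Rightarrow> complex vec" where
  "final_state n m Us x = evolve n m x (tl Us) (hd Us *\<^sub>v unit_vec (2 ^ m) 0)"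

definition embed :: "nat list \<Rightarrow> nat \<Rightarrow> nat" where
  "embed K a = (\<Sum>j<length K. if qbit a j then 2 ^ (K ! j) else 0)"

definition partial_trace :: "nat \<Rightarrow> nat set \<Rightarrow> complex vec \<Rightarrow> complex mat" where
  "partial_trace m S \<psi> = (let K = sorted_list_of_set ({0..<m} - S); L = sorted_list_of_set S in
     mat (2 ^ length K) (2 ^ length K) (\<lambda>(a,a').
       \<Sum>t<2 ^ length L. \<psi> $ (embed K a + embed L t) * cnj (\<psi> $ (embed K a' + embed L t))))"

text \<open>A quantum query algorithm on m qubits with unitaries U0..UT (T = length Us - 1)
  tracing out the qubits in S.\<close>
definition valid_alg :: "nat \<Rightarrow> nat \<Rightarrow> complex mat list \<Rightarrow> nat set \<Rightarrow> bool" where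
  "valid_alg n m Us S \<longleftrightarrow> Us \<noteq> [] \<and> idx_qubits n < m \<and> (\<forall>U\<in>set Us. unitary (2 ^ m) U)
     \<and> S \<subseteq> {0..<m}"

definition alg_output :: "nat \<Rightarrow> nat \<Rightarrow> complex mat list \<Rightarrow> nat set \<Rightarrow> bool list \<Rightarrow> complex mat" where
  "alg_output n m Us S x = partial_trace m S (final_state n m Us x)"

definition QS_ach :: "nat \<Rightarrow> bool list set \<Rightarrow> (bool list \<Rightarrow> bool) \<Rightarrow> nat \<Rightarrow> bool" where
  "QS_ach n D f k \<longleftrightarrow> (\<exists>m Us S. valid_alg n m Us S \<and> length Us = k + 1 \<and>
     (\<forall>x\<in>D. \<forall>y\<in>D. f x \<noteq> f y \<longrightarrow> trace_dist (alg_output n m Us S x) (alg_output n m Us S y) \<ge> 1/6))"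

definition QS :: "nat \<Rightarrow> bool list set \<Rightarrow> (bool list \<Rightarrow> bool) \<Rightarrow> enat" where
  "QS n D f = Inf {enat k | k. QS_ach n D f k}"

definition QSZK_ach :: "nat \<Rightarrow> bool list set \<Rightarrow> (bool list \<Rightarrow> bool) \<Rightarrow> nat \<Rightarrow> bool" where
  "QSZK_ach n D f k \<longleftrightarrow> (\<exists>m1 Us1 S1 m2 Us2 S2.
     valid_alg n m1 Us1 S1 \<and> valid_alg n m2 Us2 S2 \<and>
     (length Us1 - 1) + (length Us2 - 1) = k \<and>
     (\<forall>x\<in>D. dim_row (alg_output n m1 Us1 S1 x) = dim_row (alg_output n m2 Us2 S2 x)) \<and>
     (\<forall>x\<in>D. f x \<longrightarrow> trace_dist (alg_output n m1 Us1 S1 x) (alg_output n m2 Us2 S2 x) \<ge> 2/3) \<and>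
     (\<forall>x\<in>D. \<not> f x \<longrightarrow> trace_dist (alg_output n m1 Us1 S1 x) (alg_output n m2 Us2 S2 x) \<le> 1/3))"

definition QSZK :: "nat \<Rightarrow> bool list set \<Rightarrow> (bool list \<Rightarrow> bool) \<Rightarrow> enat" where
  "QSZK n D f = Inf {enat k | k. QSZK_ach n D f k}"

end

theory Submission
  imports Defs "Jordan_Normal_Form.Schur_Decomposition"
begin

(* Run the two QSZK algorithms on disjoint registers, one after the other, so that T1 + T2
   queries prepare the product state rho_x (x) sigma_x of their outputs. If f x = 1 and
   f y = 0, the triangle inequality gives
     2/3 <= D(rho_x, sigma_x) <= D(rho_x, rho_y) + D(rho_y, sigma_y) + D(sigma_y, sigma_x)
         <= D(rho_x, rho_y) + 1/3 + D(sigma_x, sigma_y),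
   so D(rho_x, rho_y) or D(sigma_x, sigma_y) is at least 1/6. Both are bounded by the trace
   distance of the product states, since a unitary W attaining D(rho_x, rho_y) in the
   variational formula ||A||_1 = max_W Re tr (W A) for Hermitian A gives the unitary W (x) 1
   for the product states. The variational formula follows from the spectral theorem. *)

lemma index_mult_mat_lessThan:
  "i < dim_row A \<Longrightarrow> j < dim_col B \<Longrightarrow> dim_col A = dim_row B \<Longrightarrow>
   (A * B) $$ (i,j) = (\<Sum>l<dim_row B. A $$ (i,l) * B $$ (l,j))"
  by (simp add: index_mult_mat scalar_prod_def atLeast0LessThan)

declare index_mult_mat(1)[simp del] index_mult_mat_lessThan[simp]

lemma adj_dim[simp]: "dim_row (adj A) = dim_col A" "dim_col (adj A) = dim_row A"
  unfolding adj_def by auto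

lemma adj_index[simp]: "i < dim_col A \<Longrightarrow> j < dim_row A \<Longrightarrow> adj A $$ (i,j) = cnj (A $$ (j,i))"
  unfolding adj_def by auto

lemma adj_carrier[simp]: "A \<in> carrier_mat r c \<Longrightarrow> adj A \<in> carrier_mat c r"
  unfolding adj_def by auto

lemma adj_adj[simp]: "adj (adj A) = A"
  by (rule eq_matI) auto

lemma adj_minus: "A \<in> carrier_mat n m \<Longrightarrow> B \<in> carrier_mat n m \<Longrightarrow> adj (A - B) = adj A - adj B"
  by (rule eq_matI) auto

lemma adj_mult:
  assumes "A \<in> carrier_mat n m" "B \<in> carrier_mat m k"
  shows "adj (A * B) = adj B * adj A"
proof (rule eq_matI)
  fix i j assume "i < dim_row (adj B * adj A)" "j < dim_col (adj B * adj A)"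
  hence i: "i < k" and j: "j < n" using assms by auto
  have "adj (A * B) $$ (i, j) = cnj (\<Sum>l<m. A $$ (j,l) * B $$ (l,i))" using assms i j by auto
  also have "\<dots> = (\<Sum>l<m. cnj (B $$ (l,i)) * cnj (A $$ (j,l)))"
    by (simp add: cnj_sum mult.commute)
  also have "\<dots> = (adj B * adj A) $$ (i,j)" using assms i j by auto
  finally show "adj (A * B) $$ (i, j) = (adj B * adj A) $$ (i, j)" .
qed (use assms in auto)

lemma unitaryD: "unitary n U \<Longrightarrow> U \<in> carrier_mat n n" "unitary n U \<Longrightarrow> adj U * U = 1\<^sub>m n"
  unfolding unitary_def by auto

lemma unitary_mult_adj: "unitary n U \<Longrightarrow> U * adj U = 1\<^sub>m n"
  using mat_mult_left_right_inverse[of "adj U" n U] unfolding unitary_def by auto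

lemma unitary_one[simp]: "unitary n (1\<^sub>m n)"
  unfolding unitary_def by auto

lemma unitary_adj: "unitary n U \<Longrightarrow> unitary n (adj U)"
  using unitary_mult_adj unfolding unitary_def by auto

lemma unitary_mult:
  assumes U: "unitary n U" and V: "unitary n V"
  shows "unitary n (U * V)"
proof -
  have cU: "U \<in> carrier_mat n n" and cV: "V \<in> carrier_mat n n" using U V unitaryD by auto
  have "adj (U * V) * (U * V) = adj V * ((adj U * U) * V)"
    using cU cV by (simp add: adj_mult[OF cU cV] assoc_mult_mat[of _ n n _ n _ n])
  also have "\<dots> = 1\<^sub>m n" using U V cV unfolding unitary_def by auto
  finally show ?thesis using cU cV unfolding unitary_def by auto
qed

lemma unitary_diag_norm_le_1:
  assumes "unitary n V" "i < n"
  shows "cmod (V $$ (i,i)) \<le> 1"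
proof -
  have cV: "V \<in> carrier_mat n n" using assms unitaryD by auto
  have "1 = (adj V * V) $$ (i,i)" using assms unfolding unitary_def by auto
  also have "\<dots> = of_real (\<Sum>l<n. (cmod (V $$ (l,i)))\<^sup>2)"
    using cV assms(2) by (simp add: mult.commute complex_norm_square[symmetric])
  finally have "(\<Sum>l<n. (cmod (V $$ (l,i)))\<^sup>2) = 1"
    by (metis of_real_eq_1_iff)
  moreover have "(cmod (V $$ (i,i)))\<^sup>2 \<le> (\<Sum>l<n. (cmod (V $$ (l,i)))\<^sup>2)"
    using assms(2) by (intro member_le_sum) auto
  ultimately show ?thesis by (simp add: power_le_one_iff)
qed

definition mat_trace :: "complex mat \<Rightarrow> complex" where
  "mat_trace A = (\<Sum>i<dim_row A. A $$ (i,i))"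

lemma mat_trace_mult_comm:
  assumes "A \<in> carrier_mat n m" "B \<in> carrier_mat m n"
  shows "mat_trace (A * B) = mat_trace (B * A)"
proof -
  have "mat_trace (A * B) = (\<Sum>i<n. \<Sum>l<m. A $$ (i,l) * B $$ (l,i))"
    unfolding mat_trace_def using assms by simp
  also have "\<dots> = (\<Sum>l<m. \<Sum>i<n. B $$ (l,i) * A $$ (i,l))"
    by (subst sum.swap) (simp add: mult.commute)
  also have "\<dots> = mat_trace (B * A)"
    unfolding mat_trace_def using assms by simp
  finally show ?thesis .
qed

lemma mat_trace_mult_minus:
  assumes "W \<in> carrier_mat n n" "A \<in> carrier_mat n n" "B \<in> carrier_mat n n"
  shows "mat_trace (W * (A - B)) = mat_trace (W * A) - mat_trace (W * B)"
  using assms by (simp add: mult_minus_distrib_mat[of W n n A n B] mat_trace_def sum_subtractf)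

lemma mat_trace_unitary_conj:
  assumes P: "unitary n P" and X: "X \<in> carrier_mat n n"
  shows "mat_trace (P * X * adj P) = mat_trace X"
proof -
  have cP: "P \<in> carrier_mat n n" using P unitaryD by auto
  have "mat_trace (P * X * adj P) = mat_trace (P * (X * adj P))"
    using cP X by (simp add: assoc_mult_mat[of _ n n _ n _ n])
  also have "\<dots> = mat_trace ((X * adj P) * P)" by (rule mat_trace_mult_comm[of _ n n]) (use cP X in auto)
  also have "\<dots> = mat_trace (X * (adj P * P))" using cP X by (simp add: assoc_mult_mat[of _ n n _ n _ n])
  also have "\<dots> = mat_trace X" using P X unitaryD by auto
  finally show ?thesis .
qed

lemma unitary_conj_mult:
  assumes P: "unitary n P" and X: "X \<in> carrier_mat n n" and Y: "Y \<in> carrier_mat n n"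
  shows "(P * X * adj P) * (P * Y * adj P) = P * (X * Y) * adj P"
proof -
  have cP: "P \<in> carrier_mat n n" and aP: "adj P * P = 1\<^sub>m n" using P unitaryD by auto
  have "adj P * (P * (Y * adj P)) = Y * adj P"
    using assoc_mult_mat[of "adj P" n n P n "Y * adj P" n] cP Y aP by simp
  thus ?thesis using cP X Y by (simp add: assoc_mult_mat[of _ n n _ n _ n])
qed

lemma mult_conj_mult:
  assumes U: "U \<in> carrier_mat n n" and X: "X \<in> carrier_mat n n" and M: "M \<in> carrier_mat n n"
  shows "(U * X) * M * adj (U * X) = U * (X * M * adj X) * adj U"
proof -
  have XM: "X * M \<in> carrier_mat n n" and aX: "adj X \<in> carrier_mat n n" and aU: "adj U \<in> carrier_mat n n"
    using U X M by auto
  have "(U * X) * M * adj (U * X) = U * (X * M) * (adj X * adj U)"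
    by (simp only: adj_mult[OF U X] assoc_mult_mat[OF U X M])
  also have "\<dots> = U * ((X * M) * (adj X * adj U))"
    by (rule assoc_mult_mat[OF U XM mult_carrier_mat[OF aX aU]])
  also have "(X * M) * (adj X * adj U) = (X * M * adj X) * adj U"
    by (rule assoc_mult_mat[OF XM aX aU, symmetric])
  also have "U * (X * M * adj X * adj U) = U * (X * M * adj X) * adj U"
    by (rule assoc_mult_mat[OF U mult_carrier_mat[OF XM aX] aU, symmetric])
  finally show ?thesis .
qed

lemma unitary_conj_cancel:
  assumes uU: "unitary n U" and A: "A \<in> carrier_mat n n"
  shows "U * (adj U * (A * U)) * adj U = A"
proof -
  have U: "U \<in> carrier_mat n n" and aU: "adj U \<in> carrier_mat n n" using uU unitaryD by auto
  have "U * (adj U * (A * U)) = (U * adj U) * (A * U)"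
    by (rule assoc_mult_mat[OF U aU mult_carrier_mat[OF A U], symmetric])
  also have "\<dots> = A * U"
    unfolding unitary_mult_adj[OF uU] by (rule left_mult_one_mat[OF mult_carrier_mat[OF A U]])
  finally have "U * (adj U * (A * U)) * adj U = A * U * adj U" by (rule arg_cong)
  also have "\<dots> = A * (U * adj U)" by (rule assoc_mult_mat[OF A U aU])
  finally show ?thesis unfolding unitary_mult_adj[OF uU] using right_mult_one_mat[OF A] by simp
qed

definition diag_matrix :: "nat \<Rightarrow> (nat \<Rightarrow> complex) \<Rightarrow> complex mat" where
  "diag_matrix n d = mat n n (\<lambda>(i,j). if i = j then d i else 0)"

lemma diag_matrix_carrier[simp]: "diag_matrix n d \<in> carrier_mat n n"
  and diag_matrix_dim[simp]: "dim_row (diag_matrix n d) = n" "dim_col (diag_matrix n d) = n"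
  unfolding diag_matrix_def by auto

lemma index_mult_diag_matrix:
  assumes "X \<in> carrier_mat r n" "i < r" "j < n"
  shows "(X * diag_matrix n d) $$ (i,j) = X $$ (i,j) * d j"
proof -
  have "(X * diag_matrix n d) $$ (i,j) = (\<Sum>l<n. X $$ (i,l) * (if l = j then d j else 0))"
    using assms unfolding diag_matrix_def by (auto intro!: sum.cong)
  also have "\<dots> = (\<Sum>l<n. if l = j then X $$ (i,j) * d j else 0)"
    by (rule sum.cong) auto
  finally show ?thesis using assms(3) by simp
qed

lemma diag_matrix_mult: "diag_matrix n d * diag_matrix n e = diag_matrix n (\<lambda>i. d i * e i)"
proof (rule eq_matI)
  fix i j assume "i < dim_row (diag_matrix n (\<lambda>i. d i * e i))" "j < dim_col (diag_matrix n (\<lambda>i. d i * e i))"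
  thus "(diag_matrix n d * diag_matrix n e) $$ (i, j) = diag_matrix n (\<lambda>i. d i * e i) $$ (i, j)"
    by (subst index_mult_diag_matrix[of _ n]) (auto simp: diag_matrix_def)
qed auto

lemma adj_diag_matrix: "adj (diag_matrix n d) = diag_matrix n (\<lambda>i. cnj (d i))"
  by (rule eq_matI) (auto simp: diag_matrix_def)

lemma mat_trace_diag_matrix: "mat_trace (diag_matrix n d) = (\<Sum>i<n. d i)"
  unfolding mat_trace_def diag_matrix_def by simp

lemma mat_trace_mult_diag_matrix:
  "V \<in> carrier_mat n n \<Longrightarrow> mat_trace (V * diag_matrix n d) = (\<Sum>i<n. V $$ (i,i) * d i)"
  unfolding mat_trace_def
  by (auto simp del: index_mult_mat_lessThan simp: index_mult_diag_matrix intro!: sum.cong)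

lemma unitary_diag_matrix:
  "(\<And>i. i < n \<Longrightarrow> cnj (d i) * d i = 1) \<Longrightarrow> unitary n (diag_matrix n d)"
  unfolding unitary_def adj_diag_matrix diag_matrix_mult
  by (auto intro!: eq_matI simp: diag_matrix_def)

section \<open>Spectral theorem for Hermitian matrices\<close>

definition block_diag_scalar :: "complex \<Rightarrow> complex mat \<Rightarrow> complex mat" where
  "block_diag_scalar c X = mat (Suc (dim_row X)) (Suc (dim_col X)) (\<lambda>(i,j).
     if i = 0 \<and> j = 0 then c else if i = 0 \<or> j = 0 then 0 else X $$ (i - 1, j - 1))"

lemma block_diag_scalar_dim[simp]:
  "dim_row (block_diag_scalar c X) = Suc (dim_row X)" "dim_col (block_diag_scalar c X) = Suc (dim_col X)"
  unfolding block_diag_scalar_def by auto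

lemma block_diag_scalar_carrier[simp]:
  "X \<in> carrier_mat r k \<Longrightarrow> block_diag_scalar c X \<in> carrier_mat (Suc r) (Suc k)"
  unfolding block_diag_scalar_def by auto

lemma index_block_diag_scalar:
  "i < Suc (dim_row X) \<Longrightarrow> j < Suc (dim_col X) \<Longrightarrow> block_diag_scalar c X $$ (i,j) =
   (if i = 0 \<and> j = 0 then c else if i = 0 \<or> j = 0 then 0 else X $$ (i - 1, j - 1))"
  unfolding block_diag_scalar_def by auto

lemma block_diag_scalar_mult:
  assumes X: "X \<in> carrier_mat r k" and Y: "Y \<in> carrier_mat k c"
  shows "block_diag_scalar a X * block_diag_scalar b Y = block_diag_scalar (a * b) (X * Y)"
proof (rule eq_matI)
  fix i j assume "i < dim_row (block_diag_scalar (a * b) (X * Y))" "j < dim_col (block_diag_scalar (a * b) (X * Y))"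
  hence i: "i < Suc r" and j: "j < Suc c" using X Y by auto
  have "(block_diag_scalar a X * block_diag_scalar b Y) $$ (i,j)
      = (\<Sum>l<Suc k. block_diag_scalar a X $$ (i,l) * block_diag_scalar b Y $$ (l,j))"
    using X Y i j by (simp del: sum.lessThan_Suc)
  also have "\<dots> = block_diag_scalar a X $$ (i,0) * block_diag_scalar b Y $$ (0,j)
        + (\<Sum>l<k. block_diag_scalar a X $$ (i,Suc l) * block_diag_scalar b Y $$ (Suc l,j))"
    by (rule sum.lessThan_Suc_shift)
  also have "\<dots> = block_diag_scalar (a * b) (X * Y) $$ (i, j)"
    using X Y i j by (cases i; cases j; auto simp: index_block_diag_scalar)
  finally show "(block_diag_scalar a X * block_diag_scalar b Y) $$ (i,j) = block_diag_scalar (a * b) (X * Y) $$ (i, j)" .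
qed (use X Y in auto)

lemma adj_block_diag_scalar: "adj (block_diag_scalar a X) = block_diag_scalar (cnj a) (adj X)"
  by (rule eq_matI) (auto simp: index_block_diag_scalar)

lemma block_diag_scalar_diag_matrix:
  "block_diag_scalar (d 0) (diag_matrix k (\<lambda>i. d (Suc i))) = diag_matrix (Suc k) d"
  by (rule eq_matI) (auto simp: index_block_diag_scalar diag_matrix_def)

lemma unitary_block_diag_scalar:
  assumes "unitary k P" shows "unitary (Suc k) (block_diag_scalar 1 P)"
proof -
  have P: "P \<in> carrier_mat k k" using assms unitaryD by auto
  have "block_diag_scalar 1 (1\<^sub>m k) = 1\<^sub>m (Suc k)"
    by (rule eq_matI) (auto simp: index_block_diag_scalar)
  thus ?thesis unfolding unitary_def adj_block_diag_scalar
    using block_diag_scalar_mult[OF adj_carrier[OF P] P, of "cnj 1" 1] assms P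
    unfolding unitary_def by auto
qed

lemma cscalar_prod_self: "w \<bullet>c w = complex_of_real (\<Sum>l<dim_vec w. (cmod (w $ l))\<^sup>2)"
proof -
  have "\<And>i. w $ i * cnj (w $ i) = (complex_of_real (cmod (w $ i)))\<^sup>2"
    by (metis complex_norm_square of_real_power)
  thus ?thesis unfolding scalar_prod_def by (auto simp: atLeast0LessThan)
qed

lemma corthogonal_basis_with_head:
  fixes v :: "complex vec"
  assumes v: "v \<in> carrier_vec n" and v0: "v \<noteq> 0\<^sub>v n"
  obtains ws where "set ws \<subseteq> carrier_vec n" "corthogonal ws" "length ws = n" "ws ! 0 = v"
proof -
  interpret cof_vec_space n "TYPE(complex)" .
  define b where "b = basis_completion v"
  from basis_completion[OF v v0, folded b_def]
  have dist_b: "distinct b" and indep: "\<not> lin_dep (set b)" and bc: "set b \<subseteq> carrier_vec n"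
    and hdb: "hd b = v" and len_b: "length b = n" by auto
  have n: "n \<noteq> 0" using v v0 by auto
  from hdb len_b n obtain vs where bv: "b = v # vs" by (cases b) auto
  define ws where "ws = gram_schmidt n b"
  from gram_schmidt_result[OF bc dist_b indep refl, folded ws_def]
  have ws: "set ws \<subseteq> carrier_vec n" "corthogonal ws" "length ws = n" by (auto simp: len_b)
  moreover from gram_schmidt_hd[OF v, of vs, folded bv] have "hd ws = v" unfolding ws_def .
  hence "ws ! 0 = v" using ws(3) n by (cases ws) auto
  ultimately show thesis using that by blast
qed

lemma unitary_normalize_columns:
  assumes wsc: "set ws \<subseteq> carrier_vec n" and ws: "corthogonal ws" and len: "length ws = n"
  shows "\<exists>c. unitary n (mat n n (\<lambda>(l,j). c j * (ws ! j $ l)))"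
proof -
  define s where "s = (\<lambda>j. \<Sum>l<n. (cmod (ws ! j $ l))\<^sup>2)"
  have "j < n \<Longrightarrow> ws ! j \<in> carrier_vec n" for j using wsc len by auto
  hence dim: "j < n \<Longrightarrow> dim_vec (ws ! j) = n" for j by (simp add: carrier_vecD)
  have self: "ws ! j \<bullet>c ws ! j = complex_of_real (s j)" if "j < n" for j
    unfolding s_def cscalar_prod_self dim[OF that] ..
  have pos: "s j > 0" if j: "j < n" for j
  proof -
    have "s j \<ge> 0" unfolding s_def by (auto intro: sum_nonneg)
    moreover have "ws ! j \<bullet>c ws ! j \<noteq> 0" using corthogonalD[OF ws, of j j] len j by auto
    ultimately show "s j > 0" using self[OF j] by force
  qed
  define c where "c = (\<lambda>j. complex_of_real (1 / sqrt (s j)))"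
  define U where "U = mat n n (\<lambda>(l,j). c j * (ws ! j $ l))"
  have U: "U \<in> carrier_mat n n" unfolding U_def by auto
  have "adj U * U = 1\<^sub>m n"
  proof (rule eq_matI)
    fix i j assume "i < dim_row (1\<^sub>m n)" "j < dim_col (1\<^sub>m n)"
    hence i: "i < n" and j: "j < n" by auto
    have "(adj U * U) $$ (i,j) = cnj (c i) * c j * (\<Sum>l<n. cnj (ws ! i $ l) * (ws ! j $ l))"
      using U i j unfolding U_def by (auto simp: sum_distrib_left intro!: sum.cong)
    also have "(\<Sum>l<n. cnj (ws ! i $ l) * (ws ! j $ l)) = ws ! j \<bullet>c ws ! i"
      unfolding scalar_prod_def using dim i j by (auto simp: atLeast0LessThan mult.commute intro!: sum.cong)
    also have "cnj (c i) * c j * (ws ! j \<bullet>c ws ! i) = 1\<^sub>m n $$ (i,j)"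
    proof (cases "i = j")
      case True
      have "cnj (c i) * c j * (ws ! j \<bullet>c ws ! i) = complex_of_real (1 / sqrt (s i) * (1 / sqrt (s i)) * s i)"
        unfolding c_def using True self[OF i] by (simp only: of_real_mult complex_cnj_complex_of_real)
      also have "1 / sqrt (s i) * (1 / sqrt (s i)) * s i = 1" using pos[OF i] by (simp add: field_simps)
      finally show ?thesis using True i by simp
    next
      case False
      thus ?thesis using corthogonalD[OF ws, of j i] i j len by auto
    qed
    finally show "(adj U * U) $$ (i,j) = 1\<^sub>m n $$ (i,j)" .
  qed (use U in auto)
  thus ?thesis using U unfolding unitary_def U_def by blast
qed

lemma unitary_with_first_column:
  assumes v: "v \<in> carrier_vec n" and v0: "v \<noteq> 0\<^sub>v n"
  obtains U c where "unitary n U" "\<And>l. l < n \<Longrightarrow> U $$ (l,0) = c * v $ l"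
proof -
  obtain ws where "set ws \<subseteq> carrier_vec n" "corthogonal ws" "length ws = n" and ws0: "ws ! 0 = v"
    using corthogonal_basis_with_head[OF v v0] .
  then obtain c where "unitary n (mat n n (\<lambda>(l,j). c j * (ws ! j $ l)))"
    using unitary_normalize_columns by blast
  moreover have "0 < n" using v v0 by (cases n) auto
  ultimately show thesis by (intro that[of "mat n n (\<lambda>(l,j). c j * (ws ! j $ l))" "c 0"]) (simp_all add: ws0)
qed

lemma first_column_conj_eigenvector:
  assumes uU: "unitary n U" and A: "A \<in> carrier_mat n n" and v: "v \<in> carrier_vec n"
    and Av: "A *\<^sub>v v = e \<cdot>\<^sub>v v" and U0: "\<And>l. l < n \<Longrightarrow> U $$ (l,0) = c * v $ l" and i: "i < n"
  shows "(adj U * (A * U)) $$ (i, 0) = (if i = 0 then e else 0)"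
proof -
  have U: "U \<in> carrier_mat n n" using uU unitaryD by auto
  have n: "0 < n" using i by simp
  have AU0: "(A * U) $$ (l, 0) = e * U $$ (l, 0)" if l: "l < n" for l
  proof -
    have "(A * U) $$ (l, 0) = (\<Sum>m<n. A $$ (l,m) * (c * v $ m))"
      using A U l U0 n by auto
    also have "\<dots> = c * (A *\<^sub>v v) $ l"
      using A v l by (auto simp: index_mult_mat_vec scalar_prod_def atLeast0LessThan sum_distrib_left intro!: sum.cong)
    finally show ?thesis using Av v l U0 by simp
  qed
  have "(adj U * (A * U)) $$ (i, 0) = (\<Sum>l<n. adj U $$ (i,l) * (A * U) $$ (l, 0))"
    by (subst index_mult_mat_lessThan) (use A U i n in \<open>simp_all del: index_mult_mat_lessThan\<close>)
  also have "\<dots> = e * (\<Sum>l<n. adj U $$ (i,l) * U $$ (l, 0))"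
    by (auto simp: AU0 sum_distrib_left intro!: sum.cong)
  also have "(\<Sum>l<n. adj U $$ (i,l) * U $$ (l, 0)) = (adj U * U) $$ (i, 0)"
    using U i n by auto
  finally show ?thesis using uU unitaryD(2) i n by auto
qed

lemma hermitian_first_column_block:
  assumes B: "B \<in> carrier_mat (Suc k) (Suc k)" and hB: "adj B = B"
    and B0: "\<And>i. i < Suc k \<Longrightarrow> B $$ (i, 0) = (if i = 0 then e else 0)"
  obtains C where "C \<in> carrier_mat k k" "adj C = C" "B = block_diag_scalar e C" "of_real (Re e) = e"
proof -
  have Bsym: "B $$ (i,j) = cnj (B $$ (j,i))" if "i < Suc k" "j < Suc k" for i j
    using B that adj_index[of i B j] unfolding hB by auto
  have B00: "B $$ (0,0) = e" using B0[of 0] by simp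
  have "B $$ (0,0) = cnj (B $$ (0,0))" by (rule Bsym) simp_all
  hence "Im e = Im (cnj e)" unfolding B00 by (rule arg_cong)
  hence e: "of_real (Re e) = e" by (simp add: complex_eq_iff)
  define C where "C = mat k k (\<lambda>(i,j). B $$ (Suc i, Suc j))"
  have C: "C \<in> carrier_mat k k" unfolding C_def by auto
  have "adj C = C"
  proof (rule eq_matI)
    fix i j assume "i < dim_row C" "j < dim_col C"
    hence "i < k" "j < k" using C by auto
    thus "adj C $$ (i,j) = C $$ (i,j)" using Bsym[of "Suc i" "Suc j"] by (simp add: C_def)
  qed (use C in auto)
  moreover have "B = block_diag_scalar e C"
  proof (rule eq_matI)
    fix i j assume "i < dim_row (block_diag_scalar e C)" "j < dim_col (block_diag_scalar e C)"
    hence i: "i < Suc k" and j: "j < Suc k" using C by auto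
    have B0j: "B $$ (0, j) = (if j = 0 then e else 0)"
    proof (cases "j = 0")
      case False
      have "B $$ (0, j) = cnj (B $$ (j, 0))" by (rule Bsym) (use j in simp_all)
      thus ?thesis using B0[OF j] False by simp
    qed (use B0[of 0] in simp)
    show "B $$ (i,j) = block_diag_scalar e C $$ (i,j)"
      using B0[OF i] B0j i j C
      by (cases i; cases j) (auto simp: index_block_diag_scalar C_def)
  qed (use B C in auto)
  ultimately show thesis using that C e by blast
qed

lemma hermitian_deflate:
  assumes A: "A \<in> carrier_mat (Suc k) (Suc k)" and hA: "adj A = A"
  obtains U e C where "unitary (Suc k) U" "C \<in> carrier_mat k k" "adj C = C" "of_real (Re e) = e"
    "adj U * (A * U) = block_diag_scalar e C"
proof -
  obtain as where cp: "char_poly A = (\<Prod>a\<leftarrow>as. [:- a, 1:])" and las: "length as = Suc k"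
    using char_poly_factorized[OF A] by auto
  define e where "e = hd as"
  have "e \<in> set as" using las unfolding e_def by (cases as) auto
  hence "poly (char_poly A) e = 0" unfolding cp by (rule linear_poly_root)
  hence "eigenvalue A e" using eigenvalue_root_char_poly[OF A] by auto
  from find_eigenvector[OF A this] have "eigenvector A (find_eigenvector A e) e" .
  then obtain v where v: "v \<in> carrier_vec (Suc k)" and v0: "v \<noteq> 0\<^sub>v (Suc k)" and Av: "A *\<^sub>v v = e \<cdot>\<^sub>v v"
    using A unfolding eigenvector_def by auto
  obtain U c where uU: "unitary (Suc k) U" and U0: "\<And>l. l < Suc k \<Longrightarrow> U $$ (l,0) = c * v $ l"
    using unitary_with_first_column[OF v v0] by blast
  have U: "U \<in> carrier_mat (Suc k) (Suc k)" using uU unitaryD by auto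
  have "adj (adj U * (A * U)) = adj (A * U) * adj (adj U)"
    by (rule adj_mult[of _ "Suc k" "Suc k" _ "Suc k"]) (use A U in auto)
  also have "\<dots> = adj U * (A * U)"
    unfolding adj_mult[OF A U] hA adj_adj by (rule assoc_mult_mat[of _ "Suc k" "Suc k" _ "Suc k" _ "Suc k"]) (use A U in auto)
  finally have "adj (adj U * (A * U)) = adj U * (A * U)" .
  moreover have "adj U * (A * U) \<in> carrier_mat (Suc k) (Suc k)" using A U by auto
  ultimately obtain C where "C \<in> carrier_mat k k" "adj C = C" "adj U * (A * U) = block_diag_scalar e C"
    "of_real (Re e) = e"
    using hermitian_first_column_block first_column_conj_eigenvector[OF uU A v Av U0] by metis
  thus thesis using that uU by blast
qed

theorem hermitian_spectral:
  assumes "A \<in> carrier_mat n n" "adj A = A"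
  shows "\<exists>P r. unitary n P \<and> A = P * diag_matrix n (\<lambda>i. complex_of_real (r i)) * adj P"
  using assms
proof (induction n arbitrary: A)
  case 0
  show ?case by (rule exI[of _ "1\<^sub>m 0"], rule exI[of _ "\<lambda>_. 0"]) (use 0 in \<open>auto intro!: eq_matI\<close>)
next
  case (Suc k A)
  obtain U e C where uU: "unitary (Suc k) U" and C: "C \<in> carrier_mat k k" "adj C = C"
    and e: "of_real (Re e) = e" and UAU: "adj U * (A * U) = block_diag_scalar e C"
    using hermitian_deflate[OF Suc.prems] .
  obtain P r where uP: "unitary k P" and C_eq: "C = P * diag_matrix k (\<lambda>i. complex_of_real (r i)) * adj P"
    using Suc.IH[OF C] by auto
  define D where "D = diag_matrix k (\<lambda>i. complex_of_real (r i))"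
  define r' where "r' = (\<lambda>i. if i = 0 then Re e else r (i - 1))"
  define X where "X = block_diag_scalar 1 P"
  have U: "U \<in> carrier_mat (Suc k) (Suc k)" and P: "P \<in> carrier_mat k k" using uU uP unitaryD by auto
  have D: "D \<in> carrier_mat k k" unfolding D_def by auto
  have "X * block_diag_scalar e D * adj X = block_diag_scalar (1 * e * cnj 1) (P * D * adj P)"
    unfolding X_def adj_block_diag_scalar using P D by (simp add: block_diag_scalar_mult[of _ k k _ k])
  hence XDX: "X * block_diag_scalar e D * adj X = adj U * (A * U)" unfolding UAU C_eq D_def by simp
  have diag: "diag_matrix (Suc k) (\<lambda>i. complex_of_real (r' i)) = block_diag_scalar e D"
    unfolding block_diag_scalar_diag_matrix[symmetric] D_def r'_def using e by simp
  have X: "X \<in> carrier_mat (Suc k) (Suc k)" unfolding X_def using P by auto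
  have "(U * X) * diag_matrix (Suc k) (\<lambda>i. complex_of_real (r' i)) * adj (U * X) = A"
    unfolding diag mult_conj_mult[OF U X block_diag_scalar_carrier[OF D]] XDX
    by (rule unitary_conj_cancel[OF uU Suc.prems(1)])
  moreover have "unitary (Suc k) (U * X)" unfolding X_def by (intro unitary_mult uU unitary_block_diag_scalar uP)
  ultimately show ?case by metis
qed

section \<open>Trace norm and trace distance\<close>

lemma order_prod_linear_factors:
  fixes as :: "complex list"
  shows "Polynomial.order \<mu> (\<Prod>a\<leftarrow>as. [:- a, 1:]) = count_list as \<mu>"
proof (induction as)
  case Nil
  then show ?case by (simp add: order_0I)
next
  case (Cons a as)
  have "(\<Prod>a\<leftarrow>as. [:- a, 1:]) \<noteq> (0 :: complex poly)"
    by (auto simp: prod_list_zero_iff)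
  hence "[:- a, 1:] * (\<Prod>a\<leftarrow>as. [:- a, 1:]) \<noteq> 0"
    by (metis mult_eq_0_iff pCons_eq_0_iff one_neq_zero)
  hence "Polynomial.order \<mu> (\<Prod>a\<leftarrow>a # as. [:- a, 1:]) = Polynomial.order \<mu> [:- a, 1:] + Polynomial.order \<mu> (\<Prod>a\<leftarrow>as. [:- a, 1:])"
    using order_mult by (metis prod_list.Cons list.simps(9))
  then show ?case using Cons by (simp add: order_linear')
qed

lemma sum_count_list_eq_sum_list:
  assumes "finite T" "set as \<subseteq> T"
  shows "(\<Sum>\<mu>\<in>T. real (count_list as \<mu>) * g \<mu>) = sum_list (map g as)"
  using assms(2)
proof (induction as)
  case (Cons a as)
  have "(\<Sum>\<mu>\<in>T. real (count_list (a # as) \<mu>) * g \<mu>)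
      = (\<Sum>\<mu>\<in>T. real (count_list as \<mu>) * g \<mu> + (if \<mu> = a then g \<mu> else 0))"
    by (rule sum.cong) (auto simp: algebra_simps)
  also have "\<dots> = (\<Sum>\<mu>\<in>T. real (count_list as \<mu>) * g \<mu>) + g a"
    using Cons.prems assms(1) by (simp add: sum.distrib)
  finally show ?case using Cons by simp
qed simp

lemma sum_roots_order_prod_linear_factors:
  fixes as :: "complex list"
  shows "(\<Sum>\<mu>\<in>{\<mu>. poly (\<Prod>a\<leftarrow>as. [:- a, 1:]) \<mu> = 0}. real (Polynomial.order \<mu> (\<Prod>a\<leftarrow>as. [:- a, 1:])) * g \<mu>)
    = sum_list (map g as)"
  unfolding order_prod_linear_factors poly_prod_list_zero_iff
  by (rule sum_count_list_eq_sum_list) auto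

lemma char_poly_diag_matrix: "char_poly (diag_matrix n d) = (\<Prod>a\<leftarrow>map d [0..<n]. [:- a, 1:])"
proof -
  have "upper_triangular (diag_matrix n d)" unfolding upper_triangular_def diag_matrix_def by auto
  moreover have "diag_mat (diag_matrix n d) = map d [0..<n]"
    unfolding diag_mat_def by (auto simp: diag_matrix_def intro!: nth_equalityI)
  ultimately show ?thesis using char_poly_upper_triangular[OF diag_matrix_carrier] by metis
qed

context
  fixes n P r A
  assumes P: "unitary n P" and A_eq: "A = P * diag_matrix n (\<lambda>i. complex_of_real (r i)) * adj P"
begin

private abbreviation "D \<equiv> diag_matrix n (\<lambda>i. complex_of_real (r i))"

lemma schatten1_unitary_diag: "schatten1 A = (\<Sum>i<n. \<bar>r i\<bar>)"
proof -
  have cP: "P \<in> carrier_mat n n" using P unitaryD by auto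
  have "adj A = adj (adj P) * adj (P * D)"
    unfolding A_eq by (rule adj_mult[of _ n n _ n]) (use cP in auto)
  also have "adj (P * D) = adj D * adj P" by (rule adj_mult[OF cP diag_matrix_carrier])
  also have "adj D = D" unfolding adj_diag_matrix by simp
  finally have "adj A = A" unfolding A_eq using assoc_mult_mat[of P n n D n "adj P" n] cP by simp
  hence "adj A * A = P * (D * D) * adj P" unfolding A_eq by (simp add: unitary_conj_mult[OF P])
  also have "D * D = diag_matrix n (\<lambda>i. complex_of_real (r i ^ 2))"
    unfolding diag_matrix_mult by (simp add: power2_eq_square)
  finally have "similar_mat (adj A * A) (diag_matrix n (\<lambda>i. complex_of_real (r i ^ 2)))"
    by (intro similar_matI[where n = n and P = P and Q = "adj P"])
      (use cP unitary_mult_adj[OF P] unitaryD[OF P] in auto)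
  hence "char_poly (adj A * A) = (\<Prod>a\<leftarrow>map (\<lambda>i. complex_of_real (r i ^ 2)) [0..<n]. [:- a, 1:])"
    unfolding char_poly_diag_matrix[symmetric] by (rule char_poly_similar)
  hence "schatten1 A = sum_list (map (\<lambda>\<mu>. sqrt (Re \<mu>)) (map (\<lambda>i. complex_of_real (r i ^ 2)) [0..<n]))"
    unfolding schatten1_def Let_def by (simp only: sum_roots_order_prod_linear_factors)
  also have "\<dots> = (\<Sum>i<n. \<bar>r i\<bar>)"
    by (simp add: o_def atLeast0LessThan[symmetric] sum_set_upt_conv_sum_list_nat[symmetric])
  finally show ?thesis .
qed

text \<open>In the eigenbasis, \<open>mat_trace (W * A)\<close> is a combination of the eigenvalues with the diagonal
  entries of a unitary matrix as coefficients, and these have modulus at most one.\<close>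
lemma re_mat_trace_unitary_mult_le:
  assumes W: "unitary n W"
  shows "Re (mat_trace (W * A)) \<le> (\<Sum>i<n. \<bar>r i\<bar>)"
proof -
  have cP: "P \<in> carrier_mat n n" and cW: "W \<in> carrier_mat n n" using P W unitaryD by auto
  define V where "V = adj P * W * P"
  have V: "unitary n V" unfolding V_def by (intro unitary_mult unitary_adj P W)
  have cV: "V \<in> carrier_mat n n" using V unitaryD by auto
  have "mat_trace (W * A) = mat_trace ((W * P * D) * adj P)"
    unfolding A_eq using cP cW by (simp add: assoc_mult_mat[of _ n n _ n _ n])
  also have "\<dots> = mat_trace (adj P * (W * P * D))"
    by (rule mat_trace_mult_comm[of _ n n]) (use cP cW in auto)
  also have "\<dots> = mat_trace (V * D)"
    unfolding V_def using cP cW by (simp add: assoc_mult_mat[of _ n n _ n _ n])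
  also have "\<dots> = (\<Sum>i<n. V $$ (i,i) * complex_of_real (r i))" by (rule mat_trace_mult_diag_matrix[OF cV])
  finally have "Re (mat_trace (W * A)) = (\<Sum>i<n. Re (V $$ (i,i)) * r i)" by simp
  also have "\<dots> \<le> (\<Sum>i<n. \<bar>r i\<bar>)"
  proof (rule sum_mono)
    fix i assume "i \<in> {..<n}"
    hence "\<bar>Re (V $$ (i,i))\<bar> \<le> 1"
      using unitary_diag_norm_le_1[OF V] abs_Re_le_cmod order_trans by blast
    hence "\<bar>Re (V $$ (i,i)) * r i\<bar> \<le> \<bar>r i\<bar>" by (simp add: abs_mult mult_left_le_one_le)
    thus "Re (V $$ (i,i)) * r i \<le> \<bar>r i\<bar>" by linarith
  qed
  finally show ?thesis .
qed

text \<open>The bound is attained by the unitary with the signs of the eigenvalues as eigenvalues.\<close>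
lemma re_mat_trace_unitary_mult_attained: "\<exists>S. unitary n S \<and> Re (mat_trace (S * A)) = (\<Sum>i<n. \<bar>r i\<bar>)"
proof -
  define G where "G = diag_matrix n (\<lambda>i. if r i \<ge> 0 then 1 else -1)"
  have G: "G \<in> carrier_mat n n" and uG: "unitary n G"
    unfolding G_def by (auto intro: unitary_diag_matrix)
  have "mat_trace ((P * G * adj P) * A) = mat_trace (P * (G * D) * adj P)"
    unfolding A_eq by (subst unitary_conj_mult[OF P G]) simp_all
  also have "\<dots> = mat_trace (G * D)" by (rule mat_trace_unitary_conj[OF P]) (use G in auto)
  also have "G * D = diag_matrix n (\<lambda>i. complex_of_real \<bar>r i\<bar>)"
    unfolding G_def diag_matrix_mult by (rule arg_cong[where f = "diag_matrix n"]) auto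
  finally have "mat_trace ((P * G * adj P) * A) = (\<Sum>i<n. complex_of_real \<bar>r i\<bar>)"
    unfolding mat_trace_diag_matrix .
  moreover have "unitary n (P * G * adj P)" by (intro unitary_mult unitary_adj P uG)
  ultimately show ?thesis by (intro exI[of _ "P * G * adj P"]) simp
qed

end

lemma re_mat_trace_unitary_mult_le_schatten1:
  assumes "A \<in> carrier_mat n n" "adj A = A" "unitary n W"
  shows "Re (mat_trace (W * A)) \<le> schatten1 A"
  using hermitian_spectral[OF assms(1,2)] re_mat_trace_unitary_mult_le[OF _ _ assms(3)]
    schatten1_unitary_diag by metis

lemma schatten1_attained_by_unitary:
  assumes "A \<in> carrier_mat n n" "adj A = A"
  obtains S where "unitary n S" "Re (mat_trace (S * A)) = schatten1 A"
  using hermitian_spectral[OF assms] re_mat_trace_unitary_mult_attained schatten1_unitary_diag by metis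

lemma trace_dist_commute:
  assumes A: "A \<in> carrier_mat n n" and B: "B \<in> carrier_mat n n"
  shows "trace_dist A B = trace_dist B A"
proof -
  have "adj (A - B) * (A - B) = adj (B - A) * (B - A)"
  proof (rule eq_matI)
    fix i j assume "i < dim_row (adj (B - A) * (B - A))" "j < dim_col (adj (B - A) * (B - A))"
    hence "i < n" "j < n" using A B by auto
    thus "(adj (A - B) * (A - B)) $$ (i, j) = (adj (B - A) * (B - A)) $$ (i, j)"
      using A B by (auto intro!: sum.cong simp: algebra_simps)
  qed (use A B in auto)
  thus ?thesis unfolding trace_dist_def schatten1_def by simp
qed

lemma hermitian_minus:
  "A \<in> carrier_mat n n \<Longrightarrow> B \<in> carrier_mat n n \<Longrightarrow> adj A = A \<Longrightarrow> adj B = B \<Longrightarrow> adj (A - B) = A - B"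
  by (simp add: adj_minus)

lemma trace_dist_triangle:
  assumes c: "A \<in> carrier_mat n n" "B \<in> carrier_mat n n" "C \<in> carrier_mat n n"
    and h: "adj A = A" "adj B = B" "adj C = C"
  shows "trace_dist A C \<le> trace_dist A B + trace_dist B C"
proof -
  obtain S where S: "unitary n S" and eq: "Re (mat_trace (S * (A - C))) = schatten1 (A - C)"
    using schatten1_attained_by_unitary[OF minus_carrier_mat[OF c(3)] hermitian_minus[OF c(1,3) h(1,3)]] .
  have cS: "S \<in> carrier_mat n n" using S unitaryD by auto
  have "Re (mat_trace (S * (A - B))) \<le> schatten1 (A - B)"
    by (rule re_mat_trace_unitary_mult_le_schatten1[OF _ hermitian_minus[OF c(1,2) h(1,2)] S]) (use c in auto)
  moreover have "Re (mat_trace (S * (B - C))) \<le> schatten1 (B - C)"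
    by (rule re_mat_trace_unitary_mult_le_schatten1[OF _ hermitian_minus[OF c(2,3) h(2,3)] S]) (use c in auto)
  ultimately show ?thesis
    using eq unfolding trace_dist_def mat_trace_mult_minus[OF cS c(1,2)] mat_trace_mult_minus[OF cS c(1,3)]
      mat_trace_mult_minus[OF cS c(2,3)] by simp
qed

section \<open>Kronecker products\<close>

definition kron :: "complex mat \<Rightarrow> complex mat \<Rightarrow> complex mat" where
  "kron A B = mat (dim_row A * dim_row B) (dim_col A * dim_col B)
     (\<lambda>(i,j). A $$ (i div dim_row B, j div dim_col B) * B $$ (i mod dim_row B, j mod dim_col B))"

lemma kron_dim[simp]:
  "dim_row (kron A B) = dim_row A * dim_row B" "dim_col (kron A B) = dim_col A * dim_col B"
  unfolding kron_def by auto

lemma kron_carrier[simp]: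
  "A \<in> carrier_mat n m \<Longrightarrow> B \<in> carrier_mat p q \<Longrightarrow> kron A B \<in> carrier_mat (n * p) (m * q)"
  unfolding kron_def by auto

lemma index_kron:
  "i < dim_row A * dim_row B \<Longrightarrow> j < dim_col A * dim_col B \<Longrightarrow>
   kron A B $$ (i,j) = A $$ (i div dim_row B, j div dim_col B) * B $$ (i mod dim_row B, j mod dim_col B)"
  unfolding kron_def by auto

lemma sum_lessThan_mult:
  fixes k N :: nat
  shows "(\<Sum>l<k * N. f l) = (\<Sum>l1<k. \<Sum>l2<N. f (l1 * N + l2))"
proof (induction k)
  case (Suc k)
  have "(\<Sum>l<Suc k * N. f l) = (\<Sum>l<k * N. f l) + (\<Sum>l\<in>{k * N..<k * N + N}. f l)"
    by (simp add: add.commute sum.atLeastLessThan_concat[symmetric] lessThan_atLeast0 ac_simps)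
  also have "(\<Sum>l\<in>{k * N..<k * N + N}. f l) = (\<Sum>l2<N. f (k * N + l2))"
    using sum.shift_bounds_nat_ivl[of f 0 "k * N" N] by (simp add: add.commute lessThan_atLeast0)
  finally show ?case using Suc by simp
qed simp

lemma mult_add_less_mult:
  fixes l1 l2 k N :: nat
  assumes "l1 < k" "l2 < N"
  shows "l1 * N + l2 < k * N"
proof -
  have "l1 * N + l2 < Suc l1 * N" using assms(2) by simp
  also have "\<dots> \<le> k * N" using assms(1) by (intro mult_right_mono) auto
  finally show ?thesis .
qed

lemma mod_less_of_less_mult:
  fixes s H N :: nat
  shows "s < H * N \<Longrightarrow> s mod N < N"
  by (cases N) auto

lemma kron_mult:
  assumes A: "A \<in> carrier_mat n k" and C: "C \<in> carrier_mat k m"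
    and B: "B \<in> carrier_mat p q" and D: "D \<in> carrier_mat q r"
  shows "kron A B * kron C D = kron (A * C) (B * D)"
proof (rule eq_matI)
  fix a b assume "a < dim_row (kron (A * C) (B * D))" "b < dim_col (kron (A * C) (B * D))"
  hence a: "a < n * p" and b: "b < m * r" using A B C D by auto
  have ad: "a div p < n" and bd: "b div r < m" using a b by (auto simp: less_mult_imp_div_less)
  have am: "a mod p < p" and bm: "b mod r < r" using a b by (auto intro: mod_less_of_less_mult)
  have "(kron A B * kron C D) $$ (a,b) = (\<Sum>l<k * q. kron A B $$ (a,l) * kron C D $$ (l,b))"
    using a b A B C D by auto
  also have "\<dots> = (\<Sum>l1<k. \<Sum>l2<q. kron A B $$ (a,l1 * q + l2) * kron C D $$ (l1 * q + l2,b))"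
    by (rule sum_lessThan_mult)
  also have "\<dots> = (\<Sum>l1<k. \<Sum>l2<q. (A $$ (a div p, l1) * C $$ (l1, b div r)) * (B $$ (a mod p, l2) * D $$ (l2, b mod r)))"
  proof (intro sum.cong refl)
    fix l1 l2 assume l1: "l1 \<in> {..<k}" and l2: "l2 \<in> {..<q}"
    hence "l1 * q + l2 < k * q" by (intro mult_add_less_mult) auto
    thus "kron A B $$ (a,l1 * q + l2) * kron C D $$ (l1 * q + l2,b) =
      (A $$ (a div p, l1) * C $$ (l1, b div r)) * (B $$ (a mod p, l2) * D $$ (l2, b mod r))"
      using a b A B C D l1 l2 by (auto simp: index_kron)
  qed
  also have "\<dots> = (\<Sum>l1<k. A $$ (a div p, l1) * C $$ (l1, b div r)) * (\<Sum>l2<q. B $$ (a mod p, l2) * D $$ (l2, b mod r))"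
    by (simp add: sum_product mult_ac)
  also have "\<dots> = kron (A * C) (B * D) $$ (a,b)"
    using a b A B C D ad bd am bm by (auto simp: index_kron)
  finally show "(kron A B * kron C D) $$ (a,b) = kron (A * C) (B * D) $$ (a,b)" .
qed (use A B C D in auto)

lemma adj_kron: "adj (kron A B) = kron (adj A) (adj B)"
proof (rule eq_matI)
  fix a b assume "a < dim_row (kron (adj A) (adj B))" "b < dim_col (kron (adj A) (adj B))"
  hence a: "a < dim_col A * dim_col B" and b: "b < dim_row A * dim_row B" by auto
  have "a div dim_col B < dim_col A" "b div dim_row B < dim_row A" "a mod dim_col B < dim_col B"
    "b mod dim_row B < dim_row B" using a b by (auto simp: less_mult_imp_div_less intro: mod_less_of_less_mult)
  thus "adj (kron A B) $$ (a,b) = kron (adj A) (adj B) $$ (a,b)"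
    using a b by (auto simp: index_kron)
qed auto

lemma kron_one: "kron (1\<^sub>m n) (1\<^sub>m N) = 1\<^sub>m (n * N)"
proof (rule eq_matI)
  fix a b assume "a < dim_row (1\<^sub>m (n * N))" "b < dim_col (1\<^sub>m (n * N))"
  hence a: "a < n * N" and b: "b < n * N" by auto
  have "a div N < n" "b div N < n" "a mod N < N" "b mod N < N"
    using a b by (auto simp: less_mult_imp_div_less intro: mod_less_of_less_mult)
  moreover have "(a = b) = (a div N = b div N \<and> a mod N = b mod N)"
    by (metis div_mult_mod_eq)
  ultimately show "kron (1\<^sub>m n) (1\<^sub>m N) $$ (a,b) = 1\<^sub>m (n * N) $$ (a,b)"
    using a b by (auto simp: index_kron)
qed auto

lemma unitary_kron: "unitary n U \<Longrightarrow> unitary N V \<Longrightarrow> unitary (n * N) (kron U V)"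
  unfolding unitary_def adj_kron by (auto simp: kron_mult[of _ n n _ n _ N N _ N] kron_one)

lemma mat_trace_kron:
  assumes "A \<in> carrier_mat n n" "B \<in> carrier_mat N N"
  shows "mat_trace (kron A B) = mat_trace A * mat_trace B"
proof -
  have "mat_trace (kron A B) = (\<Sum>l1<n. \<Sum>l2<N. kron A B $$ (l1 * N + l2, l1 * N + l2))"
    unfolding mat_trace_def using assms by (simp add: sum_lessThan_mult)
  also have "\<dots> = (\<Sum>l1<n. \<Sum>l2<N. A $$ (l1, l1) * B $$ (l2, l2))"
  proof (intro sum.cong refl)
    fix l1 l2 assume l1: "l1 \<in> {..<n}" and l2: "l2 \<in> {..<N}"
    hence "l1 * N + l2 < n * N" by (intro mult_add_less_mult) auto
    thus "kron A B $$ (l1 * N + l2, l1 * N + l2) = A $$ (l1, l1) * B $$ (l2, l2)"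
      using assms l1 l2 by (auto simp: index_kron)
  qed
  also have "\<dots> = mat_trace A * mat_trace B" unfolding mat_trace_def using assms by (simp add: sum_product)
  finally show ?thesis .
qed

lemma mat_trace_kron_mult_minus:
  assumes X: "X \<in> carrier_mat n n" and Y: "Y \<in> carrier_mat N N"
    and R: "R \<in> carrier_mat n n" "R' \<in> carrier_mat n n" and S: "S \<in> carrier_mat N N" "S' \<in> carrier_mat N N"
  shows "mat_trace (kron X Y * (kron R S - kron R' S'))
    = mat_trace (X * R) * mat_trace (Y * S) - mat_trace (X * R') * mat_trace (Y * S')"
  using assms
  by (simp add: mat_trace_mult_minus[of _ "n * N"] kron_mult[of _ n n _ n _ N N _ N] mat_trace_kron[of _ n _ N])

text \<open>Trace distance cannot grow under the partial trace: a unitary witnessing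
  \<open>trace_dist \<rho> \<rho>'\<close> tensored with the identity witnesses at least as much for the product states.\<close>
lemma trace_dist_le_kron_left:
  assumes R: "\<rho> \<in> carrier_mat n n" "\<rho>' \<in> carrier_mat n n" and S: "\<sigma> \<in> carrier_mat N N" "\<sigma>' \<in> carrier_mat N N"
    and h: "adj \<rho> = \<rho>" "adj \<rho>' = \<rho>'" "adj \<sigma> = \<sigma>" "adj \<sigma>' = \<sigma>'"
    and tr: "mat_trace \<sigma> = 1" "mat_trace \<sigma>' = 1"
  shows "trace_dist \<rho> \<rho>' \<le> trace_dist (kron \<rho> \<sigma>) (kron \<rho>' \<sigma>')"
proof -
  obtain W where W: "unitary n W" and eq: "Re (mat_trace (W * (\<rho> - \<rho>'))) = schatten1 (\<rho> - \<rho>')"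
    using schatten1_attained_by_unitary[OF minus_carrier_mat[OF R(2)] hermitian_minus[OF R h(1,2)]] .
  have cW: "W \<in> carrier_mat n n" using W unitaryD by auto
  have "Re (mat_trace (kron W (1\<^sub>m N) * (kron \<rho> \<sigma> - kron \<rho>' \<sigma>'))) \<le> schatten1 (kron \<rho> \<sigma> - kron \<rho>' \<sigma>')"
    by (rule re_mat_trace_unitary_mult_le_schatten1[OF _ _ unitary_kron[OF W unitary_one]])
      (use R S h in \<open>auto simp: adj_kron adj_minus[of _ "n * N" "n * N"]\<close>)
  thus ?thesis
    unfolding trace_dist_def mat_trace_kron_mult_minus[OF cW one_carrier_mat R S]
    using eq tr S by (simp add: mat_trace_mult_minus[OF cW R])
qed

lemma trace_dist_le_kron_right:
  assumes R: "\<rho> \<in> carrier_mat n n" "\<rho>' \<in> carrier_mat n n" and S: "\<sigma> \<in> carrier_mat N N" "\<sigma>' \<in> carrier_mat N N"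
    and h: "adj \<rho> = \<rho>" "adj \<rho>' = \<rho>'" "adj \<sigma> = \<sigma>" "adj \<sigma>' = \<sigma>'"
    and tr: "mat_trace \<rho> = 1" "mat_trace \<rho>' = 1"
  shows "trace_dist \<sigma> \<sigma>' \<le> trace_dist (kron \<rho> \<sigma>) (kron \<rho>' \<sigma>')"
proof -
  obtain W where W: "unitary N W" and eq: "Re (mat_trace (W * (\<sigma> - \<sigma>'))) = schatten1 (\<sigma> - \<sigma>')"
    using schatten1_attained_by_unitary[OF minus_carrier_mat[OF S(2)] hermitian_minus[OF S h(3,4)]] .
  have cW: "W \<in> carrier_mat N N" using W unitaryD by auto
  have "Re (mat_trace (kron (1\<^sub>m n) W * (kron \<rho> \<sigma> - kron \<rho>' \<sigma>'))) \<le> schatten1 (kron \<rho> \<sigma> - kron \<rho>' \<sigma>')"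
    by (rule re_mat_trace_unitary_mult_le_schatten1[OF _ _ unitary_kron[OF unitary_one W]])
      (use R S h in \<open>auto simp: adj_kron adj_minus[of _ "n * N" "n * N"]\<close>)
  thus ?thesis
    unfolding trace_dist_def mat_trace_kron_mult_minus[OF one_carrier_mat cW R S]
    using eq tr R by (simp add: mat_trace_mult_minus[OF cW S])
qed

lemma qbit_eq_bit: "qbit s j = bit s j"
  unfolding qbit_def bit_nat_def ..

definition sum_pow2 :: "nat set \<Rightarrow> nat" where
  "sum_pow2 P = (\<Sum>p\<in>P. 2 ^ p)"

lemma bit_sum_pow2: "finite P \<Longrightarrow> bit (sum_pow2 P) p \<longleftrightarrow> p \<in> P"
proof (induction P arbitrary: p rule: finite_induct)
  case (insert x F)
  have "bit ((2::nat) ^ x + sum_pow2 F) p \<longleftrightarrow> bit ((2::nat) ^ x) p \<or> bit (sum_pow2 F) p"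
    by (rule bit_disjunctive_add_iff) (use insert in \<open>auto simp: bit_exp_iff\<close>)
  moreover have "sum_pow2 (insert x F) = 2 ^ x + sum_pow2 F" using insert by (simp add: sum_pow2_def)
  ultimately show ?case using insert by (auto simp: bit_exp_iff)
qed (simp add: sum_pow2_def)

lemma sum_pow2_less: "P \<subseteq> {..<m} \<Longrightarrow> sum_pow2 P < 2 ^ m"
proof -
  assume "P \<subseteq> {..<m}"
  hence "sum_pow2 P \<le> (\<Sum>p<m. 2 ^ p)" unfolding sum_pow2_def by (intro sum_mono2) auto
  also have "(\<Sum>p<m. (2::nat) ^ p) < 2 ^ m" by (induction m) auto
  finally show ?thesis .
qed

lemma bit_imp_less: fixes s :: nat shows "s < 2 ^ m \<Longrightarrow> bit s p \<Longrightarrow> p < m"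
  by (metis bit_take_bit_iff take_bit_nat_eq_self_iff)

lemma less_pow2_if_bits_less: fixes s :: nat shows "(\<And>p. bit s p \<Longrightarrow> p < m) \<Longrightarrow> s < 2 ^ m"
  by (metis bit_take_bit_iff bit_eqI take_bit_nat_less_exp)

lemma eq_if_bits_below_eq:
  fixes a b :: nat
  assumes "a < 2 ^ k" "b < 2 ^ k" "\<And>j. j < k \<Longrightarrow> bit a j = bit b j"
  shows "a = b"
  by (rule bit_eqI) (use assms bit_imp_less in blast)

text \<open>The qubits that are set in \<open>embed K a\<close>.\<close>
definition selected :: "nat list \<Rightarrow> nat \<Rightarrow> nat set" where
  "selected K a = (!) K ` {j. j < length K \<and> bit a j}"

lemma selected_subset: "selected K a \<subseteq> set K"
  unfolding selected_def by auto

lemma finite_selected[simp]: "finite (selected K a)"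
  unfolding selected_def by auto

lemma nth_mem_selected_iff: "distinct K \<Longrightarrow> j < length K \<Longrightarrow> K ! j \<in> selected K a \<longleftrightarrow> bit a j"
  unfolding selected_def by (auto simp: nth_eq_iff_index_eq)

lemma embed_eq_sum_pow2: "distinct K \<Longrightarrow> embed K a = sum_pow2 (selected K a)"
proof -
  assume "distinct K"
  hence inj: "inj_on ((!) K) {j. j < length K \<and> bit a j}"
    by (auto simp: inj_on_def nth_eq_iff_index_eq)
  have "embed K a = (\<Sum>j\<in>{j. j < length K \<and> bit a j}. 2 ^ (K ! j))"
    unfolding embed_def qbit_eq_bit by (simp add: sum.inter_filter[symmetric] lessThan_def Collect_conj_eq)
  also have "\<dots> = sum_pow2 (selected K a)"
    unfolding sum_pow2_def selected_def by (rule sum.reindex[OF inj, symmetric, unfolded o_def])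
  finally show ?thesis .
qed

text \<open>As \<open>K\<close> and \<open>L\<close> partition the qubits, \<open>embed K a + embed L t\<close> adds numbers with
  disjoint bits.\<close>
context
  fixes K L :: "nat list" and m :: nat
  assumes dK: "distinct K" and dL: "distinct L" and disj: "set K \<inter> set L = {}"
    and un: "set K \<union> set L = {..<m}"
begin

lemma length_partition: "length K + length L = m"
proof -
  have "card (set K \<union> set L) = length K + length L"
    using disj dK dL by (simp add: card_Un_disjoint distinct_card)
  thus ?thesis using un by simp
qed

lemma embed_add_eq_sum_pow2: "embed K a + embed L t = sum_pow2 (selected K a \<union> selected L t)"
proof -
  have "selected K a \<inter> selected L t = {}" using disj selected_subset by blast
  thus ?thesis unfolding embed_eq_sum_pow2[OF dK] embed_eq_sum_pow2[OF dL] sum_pow2_def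
    by (simp add: sum.union_disjoint)
qed

lemma bit_embed_add_left: "j < length K \<Longrightarrow> bit (embed K a + embed L t) (K ! j) \<longleftrightarrow> bit a j"
proof -
  assume j: "j < length K"
  hence "K ! j \<notin> selected L t" using disj selected_subset[of L t] nth_mem[OF j] by blast
  thus ?thesis unfolding embed_add_eq_sum_pow2 using nth_mem_selected_iff[OF dK j] by (simp add: bit_sum_pow2)
qed

lemma bit_embed_add_right: "j < length L \<Longrightarrow> bit (embed K a + embed L t) (L ! j) \<longleftrightarrow> bit t j"
proof -
  assume j: "j < length L"
  hence "L ! j \<notin> selected K a" using disj selected_subset[of K a] nth_mem[OF j] by blast
  thus ?thesis unfolding embed_add_eq_sum_pow2 using nth_mem_selected_iff[OF dL j] by (simp add: bit_sum_pow2)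
qed

lemma embed_add_less: "embed K a + embed L t < 2 ^ m"
  unfolding embed_add_eq_sum_pow2 using un selected_subset[of K a] selected_subset[of L t]
  by (intro sum_pow2_less) blast

lemma embed_add_bij:
  "bij_betw (\<lambda>(a,t). embed K a + embed L t) ({..<2 ^ length K} \<times> {..<2 ^ length L}) {..<2 ^ m}"
proof -
  let ?h = "\<lambda>(a,t). embed K a + embed L t"
  let ?A = "{..<(2::nat) ^ length K} \<times> {..<(2::nat) ^ length L}"
  have inj: "inj_on ?h ?A"
  proof (rule inj_onI, clarify)
    fix a t a' t'
    assume a: "a < 2 ^ length K" and t: "t < 2 ^ length L" and a': "a' < 2 ^ length K"
      and t': "t' < 2 ^ length L" and eq: "embed K a + embed L t = embed K a' + embed L t'"
    show "a = a' \<and> t = t'"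
      using eq_if_bits_below_eq[OF a a'] eq_if_bits_below_eq[OF t t']
        bit_embed_add_left[of _ a t] bit_embed_add_left[of _ a' t']
        bit_embed_add_right[of _ a t] bit_embed_add_right[of _ a' t'] eq
      by metis
  qed
  have "card (?h ` ?A) = 2 ^ m"
    using card_image[OF inj] length_partition by (simp add: power_add[symmetric])
  hence "?h ` ?A = {..<2 ^ m}" using embed_add_less by (intro card_subset_eq) auto
  thus ?thesis using inj unfolding bij_betw_def by auto
qed

lemma sum_embed_add: "(\<Sum>a<2 ^ length K. \<Sum>t<2 ^ length L. f (embed K a + embed L t)) = (\<Sum>s<2 ^ m. f s)"
proof -
  have "(\<Sum>a<2 ^ length K. \<Sum>t<2 ^ length L. f (embed K a + embed L t))
      = (\<Sum>x\<in>{..<2 ^ length K} \<times> {..<2 ^ length L}. f ((\<lambda>(a,t). embed K a + embed L t) x))"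
    by (simp add: sum.cartesian_product split_def)
  also have "\<dots> = (\<Sum>s<2 ^ m. f s)" by (rule sum.reindex_bij_betw[OF embed_add_bij])
  finally show ?thesis .
qed

end

section \<open>The query operator\<close>

definition perm_mat :: "nat \<Rightarrow> (nat \<Rightarrow> nat) \<Rightarrow> complex mat" where
  "perm_mat M g = mat M M (\<lambda>(r,c). if c = g r then 1 else 0)"

lemma perm_mat_carrier[simp]: "perm_mat M g \<in> carrier_mat M M"
  and perm_mat_dim[simp]: "dim_row (perm_mat M g) = M" "dim_col (perm_mat M g) = M"
  unfolding perm_mat_def by auto

lemma index_perm_mat_mult_vec:
  assumes "dim_vec v = M" "r < M" "g r < M"
  shows "(perm_mat M g *\<^sub>v v) $ r = v $ (g r)"
proof -
  have "(perm_mat M g *\<^sub>v v) $ r = (\<Sum>c<M. (if c = g r then 1 else 0) * v $ c)"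
    using assms unfolding perm_mat_def by (simp add: index_mult_mat_vec scalar_prod_def atLeast0LessThan)
  also have "\<dots> = (\<Sum>c<M. if c = g r then v $ (g r) else 0)" by (rule sum.cong) auto
  finally show ?thesis using assms by simp
qed

lemma unitary_perm_mat:
  assumes bij: "bij_betw g {..<M} {..<M}"
  shows "unitary M (perm_mat M g)"
proof -
  have "adj (perm_mat M g) * perm_mat M g = 1\<^sub>m M"
  proof (rule eq_matI)
    fix i j assume "i < dim_row (1\<^sub>m M)" "j < dim_col (1\<^sub>m M)"
    hence i: "i < M" and j: "j < M" by auto
    have "(adj (perm_mat M g) * perm_mat M g) $$ (i,j) = (\<Sum>r<M. (\<lambda>s. if i = s \<and> j = s then 1 else 0) (g r))"
      using i j unfolding perm_mat_def by (auto intro!: sum.cong)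
    also have "\<dots> = (\<Sum>s<M. if i = s \<and> j = s then 1 else 0)" by (rule sum.reindex_bij_betw[OF bij])
    finally show "(adj (perm_mat M g) * perm_mat M g) $$ (i,j) = 1\<^sub>m M $$ (i,j)" using i j by auto
  qed auto
  thus ?thesis unfolding unitary_def by auto
qed

lemma bit_imp_ge: fixes s :: nat shows "bit s q \<Longrightarrow> 2 ^ q \<le> s"
  using bit_imp_less[of s q q] by (meson less_irrefl not_le)

lemma bit_add_pow2_self: fixes s :: nat shows "bit (s + 2 ^ q) q \<longleftrightarrow> \<not> bit s q"
  unfolding bit_nat_def by simp

lemma bit_add_pow2: fixes s :: nat shows "\<not> bit s q \<Longrightarrow> bit (s + 2 ^ q) p \<longleftrightarrow> bit s p \<or> p = q"
  using bit_disjunctive_add_iff[of s "2 ^ q" p] by (auto simp: bit_exp_iff)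

lemma query_perm_eq:
  "query_perm n x s = (if s mod 2 ^ idx_qubits n < n \<and> x ! (s mod 2 ^ idx_qubits n)
     then (if bit s (idx_qubits n) then s - 2 ^ idx_qubits n else s + 2 ^ idx_qubits n) else s)"
  unfolding query_perm_def Let_def qbit_eq_bit ..

text \<open>The query flips qubit \<open>q = idx_qubits n\<close> under a condition on the lower \<open>q\<close> qubits only,
  which the flip does not change.\<close>
lemma query_perm_involutive: "query_perm n x (query_perm n x s) = s"
proof -
  define q where "q = idx_qubits n"
  define c where "c = (\<lambda>s. s mod 2 ^ q < n \<and> x ! (s mod 2 ^ q))"
  have qp: "\<And>s. query_perm n x s = (if c s then (if bit s q then s - 2 ^ q else s + 2 ^ q) else s)"
    unfolding query_perm_eq c_def q_def ..
  show ?thesis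
  proof (cases "c s")
    case True
    show ?thesis
    proof (cases "bit s q")
      case b: True
      have ge: "2 ^ q \<le> s" by (rule bit_imp_ge[OF b])
      hence "c (s - 2 ^ q)" and "\<not> bit (s - 2 ^ q) q"
        using True b bit_add_pow2_self[of "s - 2 ^ q" q] unfolding c_def by (simp_all add: le_mod_geq)
      thus ?thesis unfolding qp using True b ge by simp
    next
      case b: False
      have "c (s + 2 ^ q)" and "bit (s + 2 ^ q) q" using True b bit_add_pow2_self unfolding c_def by simp_all
      thus ?thesis unfolding qp using True b by simp
    qed
  qed (simp add: qp)
qed

lemma query_perm_less:
  assumes "idx_qubits n < m" "s < 2 ^ m"
  shows "query_perm n x s < 2 ^ m"
proof (cases "bit s (idx_qubits n)")
  case True
  hence "query_perm n x s \<le> s" unfolding query_perm_eq by auto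
  thus ?thesis using assms by simp
next
  case False
  have "s + 2 ^ idx_qubits n < 2 ^ m"
    by (rule less_pow2_if_bits_less) (use bit_add_pow2[OF False] bit_imp_less[OF assms(2)] assms(1) in auto)
  thus ?thesis unfolding query_perm_eq using False assms by auto
qed

lemma query_op_eq_perm_mat:
  assumes "idx_qubits n < m"
  shows "query_op n m x = perm_mat (2 ^ m) (query_perm n x)"
proof (rule eq_matI)
  fix r c assume "r < dim_row (perm_mat (2 ^ m) (query_perm n x))" "c < dim_col (perm_mat (2 ^ m) (query_perm n x))"
  moreover have "(r = query_perm n x c) = (c = query_perm n x r)" using query_perm_involutive[of n x] by metis
  ultimately show "query_op n m x $$ (r,c) = perm_mat (2 ^ m) (query_perm n x) $$ (r,c)"
    unfolding query_op_def perm_mat_def by simp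
qed (auto simp: query_op_def)

lemma query_op_carrier[simp]: "query_op n m x \<in> carrier_mat (2 ^ m) (2 ^ m)"
  unfolding query_op_def by auto

lemma unitary_query_op: "idx_qubits n < m \<Longrightarrow> unitary (2 ^ m) (query_op n m x)"
  unfolding query_op_eq_perm_mat
  by (intro unitary_perm_mat bij_betw_byWitness[where f' = "query_perm n x"])
    (auto simp: query_perm_involutive query_perm_less)

text \<open>The index register and the target qubit lie within the low \<open>mL\<close> qubits, so the query
  only acts on the low part \<open>lo\<close> of a basis state \<open>hi * 2 ^ mL + lo\<close>.\<close>
lemma query_perm_high_low:
  assumes q: "idx_qubits n < mL" and lo: "lo < 2 ^ mL"
  shows "query_perm n x (hi * 2 ^ mL + lo) = hi * 2 ^ mL + query_perm n x lo"
proof -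
  define q where "q = idx_qubits n"
  define Q :: nat where "Q = 2 ^ q"
  define e where "e = mL - q"
  have L: "(2::nat) ^ mL = 2 ^ e * Q" unfolding e_def Q_def using q unfolding q_def[symmetric]
    by (simp add: power_add[symmetric])
  have e0: "e > 0" using q unfolding e_def q_def by simp
  have mod_eq: "(hi * 2 ^ mL + lo) mod Q = lo mod Q" unfolding L mult.assoc[symmetric] by (rule mod_mult_self3)
  have "(hi * 2 ^ mL + lo) div Q = hi * 2 ^ e + lo div Q" unfolding L mult.assoc[symmetric] Q_def by simp
  moreover have "even (hi * (2::nat) ^ e)" using e0 by simp
  ultimately have bit_eq: "bit (hi * 2 ^ mL + lo) q = bit lo q" unfolding bit_nat_def Q_def[symmetric] by simp
  show ?thesis
  proof (cases "bit lo q")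
    case True
    hence "Q \<le> lo" using bit_imp_ge unfolding Q_def by blast
    thus ?thesis unfolding query_perm_eq q_def[symmetric] Q_def[symmetric] mod_eq bit_eq using True by simp
  qed (unfold query_perm_eq q_def[symmetric] Q_def[symmetric] mod_eq bit_eq, simp)
qed

definition vec_kron :: "complex vec \<Rightarrow> complex vec \<Rightarrow> complex vec" where
  "vec_kron a b = vec (dim_vec a * dim_vec b) (\<lambda>s. a $ (s div dim_vec b) * b $ (s mod dim_vec b))"

lemma vec_kron_dim[simp]: "dim_vec (vec_kron a b) = dim_vec a * dim_vec b"
  unfolding vec_kron_def by simp

lemma vec_kron_carrier[simp]:
  "a \<in> carrier_vec H \<Longrightarrow> b \<in> carrier_vec N \<Longrightarrow> vec_kron a b \<in> carrier_vec (H * N)"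
  unfolding carrier_vec_def by simp

lemma index_vec_kron:
  "s < dim_vec a * dim_vec b \<Longrightarrow> vec_kron a b $ s = a $ (s div dim_vec b) * b $ (s mod dim_vec b)"
  unfolding vec_kron_def by simp

lemma kron_mult_vec_kron:
  assumes A: "A \<in> carrier_mat r h" and B: "B \<in> carrier_mat p q"
    and a: "a \<in> carrier_vec h" and b: "b \<in> carrier_vec q"
  shows "kron A B *\<^sub>v vec_kron a b = vec_kron (A *\<^sub>v a) (B *\<^sub>v b)"
proof (rule eq_vecI)
  fix s assume "s < dim_vec (vec_kron (A *\<^sub>v a) (B *\<^sub>v b))"
  hence s: "s < r * p" using A B by simp
  have sd: "s div p < r" and sm: "s mod p < p" using s by (auto simp: less_mult_imp_div_less mod_less_of_less_mult)
  have "(kron A B *\<^sub>v vec_kron a b) $ s = (\<Sum>l<h * q. kron A B $$ (s,l) * vec_kron a b $ l)"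
    using s A B a b by (auto simp: index_mult_mat_vec scalar_prod_def atLeast0LessThan intro!: sum.cong)
  also have "\<dots> = (\<Sum>l1<h. \<Sum>l2<q. kron A B $$ (s,l1 * q + l2) * vec_kron a b $ (l1 * q + l2))"
    by (rule sum_lessThan_mult)
  also have "\<dots> = (\<Sum>l1<h. \<Sum>l2<q. (A $$ (s div p, l1) * a $ l1) * (B $$ (s mod p, l2) * b $ l2))"
  proof (intro sum.cong refl)
    fix l1 l2 assume "l1 \<in> {..<h}" "l2 \<in> {..<q}"
    moreover from this have "l1 * q + l2 < h * q" by (intro mult_add_less_mult) auto
    ultimately show "kron A B $$ (s,l1 * q + l2) * vec_kron a b $ (l1 * q + l2)
        = (A $$ (s div p, l1) * a $ l1) * (B $$ (s mod p, l2) * b $ l2)"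
      using s A B a b by (simp add: index_kron index_vec_kron)
  qed
  also have "\<dots> = (\<Sum>l1<h. A $$ (s div p, l1) * a $ l1) * (\<Sum>l2<q. B $$ (s mod p, l2) * b $ l2)"
    by (simp add: sum_product)
  also have "\<dots> = vec_kron (A *\<^sub>v a) (B *\<^sub>v b) $ s"
    using s sd sm A B a b
    by (auto simp: index_vec_kron index_mult_mat_vec scalar_prod_def atLeast0LessThan intro!: sum.cong)
  finally show "(kron A B *\<^sub>v vec_kron a b) $ s = vec_kron (A *\<^sub>v a) (B *\<^sub>v b) $ s" .
qed (use A B in simp)

lemma unit_vec_mult_eq_vec_kron:
  assumes "H > 0" "N > 0"
  shows "unit_vec (H * N) 0 = vec_kron (unit_vec H 0) (unit_vec N 0)"
proof (rule eq_vecI)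
  fix s assume "s < dim_vec (vec_kron (unit_vec H 0) (unit_vec N 0))"
  hence s: "s < H * N" by simp
  have "(s = 0) = (s div N = 0 \<and> s mod N = 0)" by (metis div_mult_mod_eq add_0 mult_0 div_0 mod_0)
  thus "unit_vec (H * N) 0 $ s = vec_kron (unit_vec H 0) (unit_vec N 0) $ s"
    using s assms less_mult_imp_div_less[OF s] mod_less_of_less_mult[OF s]
    by (auto simp: index_vec_kron unit_vec_def)
qed simp

lemma query_op_vec_kron:
  assumes q: "idx_qubits n < mL" and a: "a \<in> carrier_vec (2 ^ mH)" and b: "b \<in> carrier_vec (2 ^ mL)"
  shows "query_op n (mH + mL) x *\<^sub>v vec_kron a b = vec_kron a (query_op n mL x *\<^sub>v b)"
proof (rule eq_vecI)
  fix s assume "s < dim_vec (vec_kron a (query_op n mL x *\<^sub>v b))"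
  hence s: "s < 2 ^ (mH + mL)" using a by (simp add: power_add query_op_def)
  define hi where "hi = s div 2 ^ mL"
  define lo where "lo = s mod 2 ^ mL"
  have lo: "lo < 2 ^ mL" unfolding lo_def by simp
  have hi: "hi < 2 ^ mH" unfolding hi_def using s by (simp add: less_mult_imp_div_less power_add)
  have qpl: "query_perm n x lo < 2 ^ mL" by (rule query_perm_less[OF q lo])
  have qps: "query_perm n x s = hi * 2 ^ mL + query_perm n x lo"
    using query_perm_high_low[OF q lo, of x hi] unfolding hi_def lo_def div_mult_mod_eq .
  have q2: "idx_qubits n < mH + mL" using q by simp
  have qps2: "query_perm n x s < 2 ^ (mH + mL)" by (rule query_perm_less[OF q2 s])
  have "(query_op n (mH + mL) x *\<^sub>v vec_kron a b) $ s = vec_kron a b $ (query_perm n x s)"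
    unfolding query_op_eq_perm_mat[OF q2]
    by (rule index_perm_mat_mult_vec) (use a b s qps2 in \<open>auto simp: power_add\<close>)
  also have "\<dots> = a $ hi * b $ (query_perm n x lo)"
    using qps2 a b qpl unfolding qps by (simp add: index_vec_kron power_add)
  also have "b $ (query_perm n x lo) = (query_op n mL x *\<^sub>v b) $ lo"
    unfolding query_op_eq_perm_mat[OF q] by (rule index_perm_mat_mult_vec[symmetric]) (use b lo qpl in auto)
  also have "a $ hi * (query_op n mL x *\<^sub>v b) $ lo = vec_kron a (query_op n mL x *\<^sub>v b) $ s"
    using s a b unfolding hi_def lo_def by (simp add: index_vec_kron power_add query_op_def)
  finally show "(query_op n (mH + mL) x *\<^sub>v vec_kron a b) $ s = vec_kron a (query_op n mL x *\<^sub>v b) $ s" .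
qed (use a b in \<open>simp add: power_add query_op_def\<close>)

definition swap_index :: "nat \<Rightarrow> nat \<Rightarrow> nat \<Rightarrow> nat" where
  "swap_index H N r = (r mod N) * H + r div N"

lemma swap_index_less:
  fixes H N r :: nat
  assumes "r < H * N"
  shows "swap_index H N r < N * H" "swap_index H N r div H = r mod N" "swap_index H N r mod H = r div N"
proof -
  have "r mod N < N" "r div N < H" using assms by (auto simp: less_mult_imp_div_less mod_less_of_less_mult)
  thus "swap_index H N r < N * H" "swap_index H N r div H = r mod N" "swap_index H N r mod H = r div N"
    unfolding swap_index_def by (auto intro: mult_add_less_mult)
qed

lemma swap_index_bij: "bij_betw (swap_index H N) {..<H * N} {..<H * N}"
proof (rule bij_betw_byWitness[where f' = "swap_index N H"])
  have inv: "swap_index N H (swap_index H N r) = r" if "r < H * N" for H N r :: nat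
    unfolding swap_index_def[of N H] using swap_index_less[OF that] by simp
  show "\<forall>r\<in>{..<H * N}. swap_index N H (swap_index H N r) = r" using inv by blast
  show "\<forall>r\<in>{..<H * N}. swap_index H N (swap_index N H r) = r" using inv[of _ N H] by (simp add: mult.commute)
  show "swap_index H N ` {..<H * N} \<subseteq> {..<H * N}" using swap_index_less(1) by (auto simp: mult.commute)
  show "swap_index N H ` {..<H * N} \<subseteq> {..<H * N}" using swap_index_less(1)[of _ N H] by (auto simp: mult.commute)
qed

lemma perm_mat_swap_index_vec_kron:
  assumes a: "a \<in> carrier_vec H" and b: "b \<in> carrier_vec N"
  shows "perm_mat (H * N) (swap_index H N) *\<^sub>v vec_kron b a = vec_kron a b"
proof (rule eq_vecI)
  fix r assume "r < dim_vec (vec_kron a b)"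
  hence r: "r < H * N" using a b by simp
  have "(perm_mat (H * N) (swap_index H N) *\<^sub>v vec_kron b a) $ r = vec_kron b a $ (swap_index H N r)"
    by (rule index_perm_mat_mult_vec) (use a b r swap_index_less(1)[OF r] in \<open>auto simp: mult.commute\<close>)
  also have "\<dots> = vec_kron a b $ r"
    using swap_index_less[OF r] swap_index_less(1)[OF r] a b r by (simp add: index_vec_kron mult.commute)
  finally show "(perm_mat (H * N) (swap_index H N) *\<^sub>v vec_kron b a) $ r = vec_kron a b $ r" .
qed (use a b in simp)

definition sq_norm :: "complex vec \<Rightarrow> real" where
  "sq_norm v = (\<Sum>i<dim_vec v. (cmod (v $ i))\<^sup>2)"

lemma of_real_sq_norm: "complex_of_real (sq_norm v) = (\<Sum>i<dim_vec v. v $ i * cnj (v $ i))"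
proof -
  have "\<And>i. v $ i * cnj (v $ i) = (complex_of_real (cmod (v $ i)))\<^sup>2"
    by (metis complex_norm_square of_real_power)
  thus ?thesis unfolding sq_norm_def by simp
qed

lemma sq_norm_unitary_mult:
  assumes U: "unitary N U" and v: "v \<in> carrier_vec N"
  shows "sq_norm (U *\<^sub>v v) = sq_norm v"
proof -
  have cU: "U \<in> carrier_mat N N" and aU: "adj U * U = 1\<^sub>m N" using U unitaryD by auto
  have "complex_of_real (sq_norm (U *\<^sub>v v))
      = (\<Sum>i<N. (\<Sum>k<N. U $$ (i,k) * v $ k) * cnj (\<Sum>l<N. U $$ (i,l) * v $ l))"
    unfolding of_real_sq_norm using cU v by (simp add: index_mult_mat_vec scalar_prod_def atLeast0LessThan)
  also have "\<dots> = (\<Sum>i<N. \<Sum>l<N. \<Sum>k<N. v $ k * cnj (v $ l) * (cnj (U $$ (i,l)) * U $$ (i,k)))"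
    by (simp add: sum_distrib_left sum_distrib_right mult_ac)
  also have "\<dots> = (\<Sum>l<N. \<Sum>k<N. \<Sum>i<N. v $ k * cnj (v $ l) * (cnj (U $$ (i,l)) * U $$ (i,k)))"
    by (subst sum.swap) (rule sum.cong[OF refl], rule sum.swap)
  also have "\<dots> = (\<Sum>l<N. \<Sum>k<N. v $ k * cnj (v $ l) * (\<Sum>i<N. cnj (U $$ (i,l)) * U $$ (i,k)))"
    by (simp add: sum_distrib_left)
  also have "\<dots> = (\<Sum>l<N. \<Sum>k<N. if k = l then v $ l * cnj (v $ l) else 0)"
  proof (intro sum.cong refl)
    fix k l assume kl: "k \<in> {..<N}" "l \<in> {..<N}"
    hence "(\<Sum>i<N. cnj (U $$ (i,l)) * U $$ (i,k)) = (adj U * U) $$ (l,k)" using cU by simp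
    thus "v $ k * cnj (v $ l) * (\<Sum>i<N. cnj (U $$ (i,l)) * U $$ (i,k)) = (if k = l then v $ l * cnj (v $ l) else 0)"
      using aU kl by auto
  qed
  also have "\<dots> = complex_of_real (sq_norm v)" unfolding of_real_sq_norm using v by simp
  finally show ?thesis by (simp only: of_real_eq_iff)
qed

lemma sq_norm_unit_vec: "i < N \<Longrightarrow> sq_norm (unit_vec N i) = 1"
proof -
  assume i: "i < N"
  have "sq_norm (unit_vec N i) = (\<Sum>j<N. if j = i then 1 else 0)"
    unfolding sq_norm_def by (rule sum.cong) (auto simp: unit_vec_def)
  thus ?thesis using i by simp
qed

lemma query_op_mult_vec_carrier[simp]: "query_op n m x *\<^sub>v v \<in> carrier_vec (2 ^ m)"
  by (rule carrier_vecI) (simp add: query_op_def)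

lemma evolve_carrier:
  "\<forall>U\<in>set Us. U \<in> carrier_mat (2 ^ m) (2 ^ m) \<Longrightarrow> v \<in> carrier_vec (2 ^ m)
   \<Longrightarrow> evolve n m x Us v \<in> carrier_vec (2 ^ m)"
proof (induction Us arbitrary: v)
  case (Cons U Us)
  have "U *\<^sub>v (query_op n m x *\<^sub>v v) \<in> carrier_vec (2 ^ m)"
    using Cons.prems by (intro mult_mat_vec_carrier[of _ "2 ^ m" "2 ^ m"]) auto
  thus ?case using Cons by simp
qed simp

lemma sq_norm_evolve:
  assumes "idx_qubits n < m"
  shows "\<forall>U\<in>set Us. unitary (2 ^ m) U \<Longrightarrow> v \<in> carrier_vec (2 ^ m) \<Longrightarrow> sq_norm (evolve n m x Us v) = sq_norm v"
proof (induction Us arbitrary: v)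
  case (Cons U Us)
  have U: "unitary (2 ^ m) U" using Cons by auto
  have w: "query_op n m x *\<^sub>v v \<in> carrier_vec (2 ^ m)" by simp
  hence "U *\<^sub>v (query_op n m x *\<^sub>v v) \<in> carrier_vec (2 ^ m)" by (rule mult_mat_vec_carrier[OF unitaryD(1)[OF U]])
  hence "sq_norm (evolve n m x (U # Us) v) = sq_norm (U *\<^sub>v (query_op n m x *\<^sub>v v))"
    using Cons by simp
  also have "\<dots> = sq_norm v"
    using sq_norm_unitary_mult[OF U w] sq_norm_unitary_mult[OF unitary_query_op[OF assms] Cons.prems(2)] by simp
  finally show ?case .
qed simp

lemma valid_algD:
  assumes "valid_alg n m Us S"
  shows "Us \<noteq> []" "idx_qubits n < m" "\<And>U. U \<in> set Us \<Longrightarrow> unitary (2 ^ m) U" "S \<subseteq> {0..<m}"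
  using assms unfolding valid_alg_def by auto

lemma set_tl_subset: "set (tl Us) \<subseteq> set Us"
  by (cases Us) auto

lemma final_state_carrier:
  assumes V: "valid_alg n m Us S"
  shows "final_state n m Us x \<in> carrier_vec (2 ^ m)"
proof -
  have c: "U \<in> carrier_mat (2 ^ m) (2 ^ m)" if "U \<in> set Us" for U
    using unitaryD(1)[OF valid_algD(3)[OF V that]] .
  have "hd Us *\<^sub>v unit_vec (2 ^ m) 0 \<in> carrier_vec (2 ^ m)"
    by (rule mult_mat_vec_carrier[OF c[OF hd_in_set[OF valid_algD(1)[OF V]]]]) simp
  moreover have "\<forall>U\<in>set (tl Us). U \<in> carrier_mat (2 ^ m) (2 ^ m)" using c set_tl_subset[of Us] by auto
  ultimately show ?thesis unfolding final_state_def by (intro evolve_carrier)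
qed

lemma sq_norm_final_state:
  assumes V: "valid_alg n m Us S"
  shows "sq_norm (final_state n m Us x) = 1"
proof -
  have h: "unitary (2 ^ m) (hd Us)" using valid_algD[OF V] by simp
  have v: "hd Us *\<^sub>v unit_vec (2 ^ m) 0 \<in> carrier_vec (2 ^ m)"
    by (rule mult_mat_vec_carrier[OF unitaryD(1)[OF h]]) simp
  have "\<forall>U\<in>set (tl Us). unitary (2 ^ m) U" using valid_algD(3)[OF V] set_tl_subset[of Us] by auto
  hence "sq_norm (final_state n m Us x) = sq_norm (hd Us *\<^sub>v unit_vec (2 ^ m) 0)"
    unfolding final_state_def by (rule sq_norm_evolve[OF valid_algD(2)[OF V] _ v])
  also have "\<dots> = 1" using sq_norm_unitary_mult[OF h] sq_norm_unit_vec[of 0 "2 ^ m"] by simp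
  finally show ?thesis .
qed

definition kept_qubits :: "nat \<Rightarrow> nat set \<Rightarrow> nat list" where
  "kept_qubits m S = sorted_list_of_set ({0..<m} - S)"

definition traced_qubits :: "nat set \<Rightarrow> nat list" where
  "traced_qubits S = sorted_list_of_set S"

lemma partial_trace_eq:
  "partial_trace m S \<psi> = mat (2 ^ length (kept_qubits m S)) (2 ^ length (kept_qubits m S)) (\<lambda>(a,a').
     \<Sum>t<2 ^ length (traced_qubits S). \<psi> $ (embed (kept_qubits m S) a + embed (traced_qubits S) t)
       * cnj (\<psi> $ (embed (kept_qubits m S) a' + embed (traced_qubits S) t)))"
  unfolding partial_trace_def kept_qubits_def traced_qubits_def Let_def ..

lemma partial_trace_carrier[simp]:
  "partial_trace m S \<psi> \<in> carrier_mat (2 ^ length (kept_qubits m S)) (2 ^ length (kept_qubits m S))"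
  unfolding partial_trace_eq by simp

lemma adj_partial_trace: "adj (partial_trace m S \<psi>) = partial_trace m S \<psi>"
  by (rule eq_matI) (auto simp: partial_trace_eq mult.commute)

lemma kept_traced_partition:
  assumes "S \<subseteq> {0..<m}"
  shows "distinct (kept_qubits m S)" "distinct (traced_qubits S)"
    "set (kept_qubits m S) \<inter> set (traced_qubits S) = {}"
    "set (kept_qubits m S) \<union> set (traced_qubits S) = {..<m}"
proof -
  have "finite S" using finite_subset[OF assms] by simp
  hence "set (kept_qubits m S) = {0..<m} - S" "set (traced_qubits S) = S"
    unfolding kept_qubits_def traced_qubits_def by simp_all
  thus "set (kept_qubits m S) \<inter> set (traced_qubits S) = {}"
    "set (kept_qubits m S) \<union> set (traced_qubits S) = {..<m}"
    using assms by auto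
qed (simp_all add: kept_qubits_def traced_qubits_def)

lemma mat_trace_partial_trace:
  assumes S: "S \<subseteq> {0..<m}" and \<psi>: "dim_vec \<psi> = 2 ^ m"
  shows "mat_trace (partial_trace m S \<psi>) = complex_of_real (sq_norm \<psi>)"
proof -
  have "mat_trace (partial_trace m S \<psi>) = (\<Sum>a<2 ^ length (kept_qubits m S). \<Sum>t<2 ^ length (traced_qubits S).
      (\<lambda>s. \<psi> $ s * cnj (\<psi> $ s)) (embed (kept_qubits m S) a + embed (traced_qubits S) t))"
    unfolding mat_trace_def by (simp add: partial_trace_eq)
  also have "\<dots> = (\<Sum>s<2 ^ m. \<psi> $ s * cnj (\<psi> $ s))" by (rule sum_embed_add[OF kept_traced_partition[OF S]])
  finally show ?thesis unfolding of_real_sq_norm \<psi> .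
qed

definition unit_trace_hermitian :: "nat \<Rightarrow> complex mat \<Rightarrow> bool" where
  "unit_trace_hermitian d \<rho> \<longleftrightarrow> \<rho> \<in> carrier_mat d d \<and> adj \<rho> = \<rho> \<and> mat_trace \<rho> = 1"

lemma unit_trace_hermitian_alg_output:
  assumes V: "valid_alg n m Us S"
  shows "unit_trace_hermitian (2 ^ length (kept_qubits m S)) (alg_output n m Us S x)"
  unfolding unit_trace_hermitian_def alg_output_def
  using adj_partial_trace mat_trace_partial_trace[OF valid_algD(4)[OF V]] final_state_carrier[OF V]
    sq_norm_final_state[OF V]
  by simp

lemma sorted_list_of_set_Un_less:
  fixes A B :: "nat set"
  assumes "finite A" "finite B" "\<forall>a\<in>A. \<forall>b\<in>B. a < b"
  shows "sorted_list_of_set (A \<union> B) = sorted_list_of_set A @ sorted_list_of_set B"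
proof -
  have "sorted_wrt (<) (sorted_list_of_set A @ sorted_list_of_set B)"
    using assms by (auto simp: sorted_wrt_append)
  moreover have "set (sorted_list_of_set A @ sorted_list_of_set B) = A \<union> B" using assms by simp
  moreover have "A \<inter> B = {}" using assms(3) by auto
  hence "length (sorted_list_of_set A @ sorted_list_of_set B) = card (A \<union> B)"
    using assms by (simp add: card_Un_disjoint)
  ultimately show ?thesis using sorted_list_of_set_unique[of "A \<union> B"] assms by blast
qed

lemma sorted_list_of_set_image_plus:
  fixes A :: "nat set"
  assumes "finite A"
  shows "sorted_list_of_set ((+) c ` A) = map ((+) c) (sorted_list_of_set A)"
proof -
  have "sorted_wrt (<) (map ((+) c) (sorted_list_of_set A))"
    unfolding sorted_wrt_map by (rule sorted_wrt_mono_rel[of _ "(<)"]) auto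
  moreover have "set (map ((+) c) (sorted_list_of_set A)) = (+) c ` A" using assms by simp
  moreover have "length (map ((+) c) (sorted_list_of_set A)) = card ((+) c ` A)"
    using assms by (simp add: card_image)
  ultimately show ?thesis using sorted_list_of_set_unique[of "(+) c ` A"] assms by blast
qed

lemma kept_qubits_shift_union:
  assumes S1: "S1 \<subseteq> {0..<m1}" and S2: "S2 \<subseteq> {0..<m2}"
  shows "kept_qubits (m1 + m2) (S2 \<union> (+) m2 ` S1) = kept_qubits m2 S2 @ map ((+) m2) (kept_qubits m1 S1)"
proof -
  have "{0..<m1 + m2} - (S2 \<union> (+) m2 ` S1) = ({0..<m2} - S2) \<union> (+) m2 ` ({0..<m1} - S1)"
  proof (intro equalityI subsetI)
    fix p assume p: "p \<in> {0..<m1 + m2} - (S2 \<union> (+) m2 ` S1)"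
    show "p \<in> ({0..<m2} - S2) \<union> (+) m2 ` ({0..<m1} - S1)"
    proof (cases "p < m2")
      case False
      hence "p = m2 + (p - m2)" "p - m2 \<in> {0..<m1} - S1" using p by force+
      thus ?thesis by (metis UnI2 image_eqI)
    qed (use p in auto)
  qed (use S2 in auto)
  thus ?thesis unfolding kept_qubits_def by (simp add: sorted_list_of_set_Un_less sorted_list_of_set_image_plus)
qed

lemma traced_qubits_shift_union:
  assumes S1: "S1 \<subseteq> {0..<m1}" and S2: "S2 \<subseteq> {0..<m2}"
  shows "traced_qubits (S2 \<union> (+) m2 ` S1) = traced_qubits S2 @ map ((+) m2) (traced_qubits S1)"
proof -
  have "finite S1" "finite S2" using finite_subset[OF S1] finite_subset[OF S2] by simp_all
  moreover have "\<forall>a\<in>S2. \<forall>b\<in>(+) m2 ` S1. a < b" using S2 by auto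
  ultimately show ?thesis unfolding traced_qubits_def
    by (simp add: sorted_list_of_set_Un_less sorted_list_of_set_image_plus)
qed

lemma sum_lessThan_add: fixes a b :: nat shows "(\<Sum>j<a + b. f j) = (\<Sum>j<a. f j) + (\<Sum>j<b. f (a + j))"
  by (induction b) (auto simp: add_ac)

lemma embed_append_shift:
  "embed (K2 @ map ((+) m2) K1) a = embed K2 (a mod 2 ^ length K2) + 2 ^ m2 * embed K1 (a div 2 ^ length K2)"
proof -
  have "embed (K2 @ map ((+) m2) K1) a
      = (\<Sum>j<length K2. if qbit a j then 2 ^ ((K2 @ map ((+) m2) K1) ! j) else 0)
        + (\<Sum>j<length K1. if qbit a (length K2 + j) then 2 ^ ((K2 @ map ((+) m2) K1) ! (length K2 + j)) else 0)"
    unfolding embed_def by (simp add: sum_lessThan_add)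
  also have "(\<Sum>j<length K2. if qbit a j then 2 ^ ((K2 @ map ((+) m2) K1) ! j) else 0)
      = embed K2 (a mod 2 ^ length K2)"
    unfolding embed_def qbit_eq_bit
    by (intro sum.cong) (auto simp: nth_append bit_take_bit_iff take_bit_eq_mod[symmetric])
  also have "(\<Sum>j<length K1. if qbit a (length K2 + j) then 2 ^ ((K2 @ map ((+) m2) K1) ! (length K2 + j)) else 0)
      = 2 ^ m2 * embed K1 (a div 2 ^ length K2)"
    unfolding embed_def sum_distrib_left qbit_eq_bit
    by (intro sum.cong) (auto simp: nth_append power_add drop_bit_eq_div[symmetric] bit_drop_bit_eq)
  finally show ?thesis .
qed

lemma index_vec_kron_embed_shift:
  assumes S1: "S1 \<subseteq> {0..<m1}" and S2: "S2 \<subseteq> {0..<m2}"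
    and \<phi>1: "\<phi>1 \<in> carrier_vec (2 ^ m1)" and \<phi>2: "\<phi>2 \<in> carrier_vec (2 ^ m2)"
  defines "K1 \<equiv> kept_qubits m1 S1" and "L1 \<equiv> traced_qubits S1"
    and "K2 \<equiv> kept_qubits m2 S2" and "L2 \<equiv> traced_qubits S2"
  shows "vec_kron \<phi>1 \<phi>2 $ (embed (K2 @ map ((+) m2) K1) a + embed (L2 @ map ((+) m2) L1) t)
    = \<phi>1 $ (embed K1 (a div 2 ^ length K2) + embed L1 (t div 2 ^ length L2))
      * \<phi>2 $ (embed K2 (a mod 2 ^ length K2) + embed L2 (t mod 2 ^ length L2))"
proof -
  define s1 where "s1 = embed K1 (a div 2 ^ length K2) + embed L1 (t div 2 ^ length L2)"
  define s2 where "s2 = embed K2 (a mod 2 ^ length K2) + embed L2 (t mod 2 ^ length L2)"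
  have s1: "s1 < 2 ^ m1" unfolding s1_def K1_def L1_def by (rule embed_add_less[OF kept_traced_partition[OF S1]])
  have s2: "s2 < 2 ^ m2" unfolding s2_def K2_def L2_def by (rule embed_add_less[OF kept_traced_partition[OF S2]])
  have "embed (K2 @ map ((+) m2) K1) a + embed (L2 @ map ((+) m2) L1) t = s1 * 2 ^ m2 + s2"
    unfolding embed_append_shift s1_def s2_def by (simp add: algebra_simps)
  moreover have "s1 * 2 ^ m2 + s2 < dim_vec \<phi>1 * dim_vec \<phi>2" using \<phi>1 \<phi>2 mult_add_less_mult[OF s1 s2] by simp
  ultimately show ?thesis unfolding s1_def[symmetric] s2_def[symmetric] using \<phi>2 s2 by (simp add: index_vec_kron)
qed

lemma partial_trace_vec_kron:
  assumes S1: "S1 \<subseteq> {0..<m1}" and S2: "S2 \<subseteq> {0..<m2}"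
    and \<phi>1: "\<phi>1 \<in> carrier_vec (2 ^ m1)" and \<phi>2: "\<phi>2 \<in> carrier_vec (2 ^ m2)"
  shows "partial_trace (m1 + m2) (S2 \<union> (+) m2 ` S1) (vec_kron \<phi>1 \<phi>2)
    = kron (partial_trace m1 S1 \<phi>1) (partial_trace m2 S2 \<phi>2)"
proof (rule eq_matI)
  define K1 where "K1 = kept_qubits m1 S1"
  define L1 where "L1 = traced_qubits S1"
  define K2 where "K2 = kept_qubits m2 S2"
  define L2 where "L2 = traced_qubits S2"
  define N2 :: nat where "N2 = 2 ^ length K2"
  define M2 :: nat where "M2 = 2 ^ length L2"
  define X1 where "X1 = (\<lambda>a t. \<phi>1 $ (embed K1 a + embed L1 t))"
  define X2 where "X2 = (\<lambda>a t. \<phi>2 $ (embed K2 a + embed L2 t))"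
  note KC = kept_qubits_shift_union[OF S1 S2, folded K1_def K2_def]
  note LC = traced_qubits_shift_union[OF S1 S2, folded L1_def L2_def]
  have key: "vec_kron \<phi>1 \<phi>2 $ (embed (K2 @ map ((+) m2) K1) a + embed (L2 @ map ((+) m2) L1) (t1 * M2 + t2))
      = X1 (a div N2) t1 * X2 (a mod N2) t2" if "t2 < M2" for a t1 t2
    using index_vec_kron_embed_shift[OF S1 S2 \<phi>1 \<phi>2, of a "t1 * M2 + t2"] that
    unfolding X1_def X2_def K1_def L1_def K2_def L2_def N2_def M2_def by simp
  show dims: "dim_row (partial_trace (m1 + m2) (S2 \<union> (+) m2 ` S1) (vec_kron \<phi>1 \<phi>2))
      = dim_row (kron (partial_trace m1 S1 \<phi>1) (partial_trace m2 S2 \<phi>2))"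
    "dim_col (partial_trace (m1 + m2) (S2 \<union> (+) m2 ` S1) (vec_kron \<phi>1 \<phi>2))
      = dim_col (kron (partial_trace m1 S1 \<phi>1) (partial_trace m2 S2 \<phi>2))"
    unfolding partial_trace_eq KC by (simp_all add: power_add K1_def K2_def mult.commute)
  fix a a' assume "a < dim_row (kron (partial_trace m1 S1 \<phi>1) (partial_trace m2 S2 \<phi>2))"
    "a' < dim_col (kron (partial_trace m1 S1 \<phi>1) (partial_trace m2 S2 \<phi>2))"
  hence a: "a < 2 ^ length K1 * N2" and a': "a' < 2 ^ length K1 * N2"
    unfolding K1_def K2_def N2_def partial_trace_eq by simp_all
  have "partial_trace (m1 + m2) (S2 \<union> (+) m2 ` S1) (vec_kron \<phi>1 \<phi>2) $$ (a, a')
      = (\<Sum>t1<2 ^ length L1. \<Sum>t2<M2.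
          vec_kron \<phi>1 \<phi>2 $ (embed (K2 @ map ((+) m2) K1) a + embed (L2 @ map ((+) m2) L1) (t1 * M2 + t2))
          * cnj (vec_kron \<phi>1 \<phi>2 $ (embed (K2 @ map ((+) m2) K1) a' + embed (L2 @ map ((+) m2) L1) (t1 * M2 + t2))))"
    using a a' unfolding partial_trace_eq KC LC M2_def N2_def
    by (simp add: power_add mult.commute sum_lessThan_mult)
  also have "\<dots> = (\<Sum>t1<2 ^ length L1. \<Sum>t2<M2.
      (X1 (a div N2) t1 * cnj (X1 (a' div N2) t1)) * (X2 (a mod N2) t2 * cnj (X2 (a' mod N2) t2)))"
    by (simp add: key mult_ac)
  also have "\<dots> = (\<Sum>t1<2 ^ length L1. X1 (a div N2) t1 * cnj (X1 (a' div N2) t1))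
      * (\<Sum>t2<M2. X2 (a mod N2) t2 * cnj (X2 (a' mod N2) t2))"
    by (simp add: sum_product)
  also have "\<dots> = kron (partial_trace m1 S1 \<phi>1) (partial_trace m2 S2 \<phi>2) $$ (a, a')"
    using a a' less_mult_imp_div_less[OF a] less_mult_imp_div_less[OF a']
      mod_less_of_less_mult[OF a] mod_less_of_less_mult[OF a']
    unfolding X1_def X2_def K1_def L1_def K2_def L2_def N2_def M2_def
    by (simp add: index_kron partial_trace_eq)
  finally show "partial_trace (m1 + m2) (S2 \<union> (+) m2 ` S1) (vec_kron \<phi>1 \<phi>2) $$ (a, a')
      = kron (partial_trace m1 S1 \<phi>1) (partial_trace m2 S2 \<phi>2) $$ (a, a')" .
qed

section \<open>Sequential composition of query algorithms\<close>

lemma evolve_kron_one: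
  assumes q: "idx_qubits n < mL" and Vs: "\<forall>V\<in>set Vs. V \<in> carrier_mat (2 ^ mL) (2 ^ mL)"
    and a: "a \<in> carrier_vec (2 ^ mH)" and b: "b \<in> carrier_vec (2 ^ mL)"
  shows "evolve n (mH + mL) x (map (kron (1\<^sub>m (2 ^ mH))) Vs) (vec_kron a b) = vec_kron a (evolve n mL x Vs b)"
  using Vs b
proof (induction Vs arbitrary: b)
  case (Cons V Vs)
  have V: "V \<in> carrier_mat (2 ^ mL) (2 ^ mL)" using Cons.prems(1) by simp
  have "kron (1\<^sub>m (2 ^ mH)) V *\<^sub>v (query_op n (mH + mL) x *\<^sub>v vec_kron a b)
      = vec_kron (1\<^sub>m (2 ^ mH) *\<^sub>v a) (V *\<^sub>v (query_op n mL x *\<^sub>v b))"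
    unfolding query_op_vec_kron[OF q a Cons.prems(2)] by (rule kron_mult_vec_kron[OF one_carrier_mat V a]) simp
  moreover have "V *\<^sub>v (query_op n mL x *\<^sub>v b) \<in> carrier_vec (2 ^ mL)" by (rule mult_mat_vec_carrier[OF V]) simp
  ultimately show ?case using Cons a by simp
qed simp

lemma evolve_append: "evolve n m x (As @ Bs) v = evolve n m x Bs (evolve n m x As v)"
  by (induction As arbitrary: v) auto

lemma evolve_snoc_mult:
  assumes J: "J \<in> carrier_mat (2 ^ m) (2 ^ m)" and M: "M \<in> carrier_mat (2 ^ m) (2 ^ m)"
  shows "evolve n m x (As @ [J * M]) v = J *\<^sub>v evolve n m x (As @ [M]) v"
  using assoc_mult_mat_vec[OF J M query_op_mult_vec_carrier] by (induction As arbitrary: v) simp_all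

text \<open>Merging the unitary \<open>J\<close> into the last unitary of \<open>Ls\<close> and appending \<open>Ks\<close> runs \<open>Ls\<close>,
  then \<open>J\<close>, then \<open>Ks\<close>, without an extra query in between.\<close>
lemma evolve_merge_junction:
  assumes ne: "Ls \<noteq> []" and J: "J \<in> carrier_mat (2 ^ m) (2 ^ m)"
    and L: "last Ls \<in> carrier_mat (2 ^ m) (2 ^ m)" and v: "v \<in> carrier_vec (2 ^ m)"
  shows "evolve n m x (tl (butlast Ls @ [J * last Ls] @ Ks)) (hd (butlast Ls @ [J * last Ls] @ Ks) *\<^sub>v v)
    = evolve n m x Ks (J *\<^sub>v evolve n m x (tl Ls) (hd Ls *\<^sub>v v))"
proof -
  obtain L0 Lr where Ls: "Ls = L0 # Lr" using ne by (cases Ls) auto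
  show ?thesis
  proof (cases "Lr = []")
    case True
    thus ?thesis using assoc_mult_mat_vec[OF J _ v, of L0] L unfolding Ls by simp
  next
    case False
    hence bl: "butlast Ls = L0 # butlast Lr" "last Ls = last Lr" and Lr: "butlast Lr @ [last Lr] = Lr"
      unfolding Ls by auto
    have "evolve n m x (tl (butlast Ls @ [J * last Ls] @ Ks)) (hd (butlast Ls @ [J * last Ls] @ Ks) *\<^sub>v v)
        = evolve n m x Ks (evolve n m x (butlast Lr @ [J * last Lr]) (L0 *\<^sub>v v))"
      unfolding bl by (simp add: evolve_append[symmetric])
    also have "evolve n m x (butlast Lr @ [J * last Lr]) (L0 *\<^sub>v v) = J *\<^sub>v evolve n m x Lr (L0 *\<^sub>v v)"
      using evolve_snoc_mult[OF J, of "last Lr" n x "butlast Lr"] L bl(2) Lr by simp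
    finally show ?thesis unfolding Ls by simp
  qed
qed

text \<open>The query register
  must be the low qubits, so the first algorithm runs on the low \<open>m1\<close> qubits, the two registers
  are swapped, and the second runs on the low \<open>m2\<close> qubits. The swap and the first unitary of the
  second algorithm are merged into the last unitary of the first, so no query is wasted.\<close>
definition compose_algs :: "nat \<Rightarrow> nat \<Rightarrow> complex mat list \<Rightarrow> complex mat list \<Rightarrow> complex mat list" where
  "compose_algs m1 m2 Us1 Us2 =
    (let Ls = map (kron (1\<^sub>m (2 ^ m2))) Us1;
         J = kron (1\<^sub>m (2 ^ m1)) (hd Us2) * perm_mat (2 ^ m1 * 2 ^ m2) (swap_index (2 ^ m1) (2 ^ m2))
     in butlast Ls @ [J * last Ls] @ map (kron (1\<^sub>m (2 ^ m1))) (tl Us2))"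

lemma valid_alg_compose:
  assumes V1: "valid_alg n m1 Us1 S1" and V2: "valid_alg n m2 Us2 S2"
  shows "valid_alg n (m1 + m2) (compose_algs m1 m2 Us1 Us2) (S2 \<union> (+) m2 ` S1)"
    "length (compose_algs m1 m2 Us1 Us2) = length Us1 + length Us2 - 1"
proof -
  note A1 = valid_algD[OF V1] and A2 = valid_algD[OF V2]
  have u1: "unitary (2 ^ (m1 + m2)) (kron (1\<^sub>m (2 ^ m2)) U)" if "U \<in> set Us1" for U
    using unitary_kron[OF unitary_one[of "2 ^ m2"] A1(3)[OF that]] by (simp add: power_add mult.commute)
  have u2: "unitary (2 ^ (m1 + m2)) (kron (1\<^sub>m (2 ^ m1)) V)" if "V \<in> set Us2" for V
    using unitary_kron[OF unitary_one[of "2 ^ m1"] A2(3)[OF that]] by (simp add: power_add)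
  have "unitary (2 ^ (m1 + m2)) (perm_mat (2 ^ m1 * 2 ^ m2) (swap_index (2 ^ m1) (2 ^ m2)))"
    using unitary_perm_mat[OF swap_index_bij] by (simp add: power_add)
  hence uJ: "unitary (2 ^ (m1 + m2)) (kron (1\<^sub>m (2 ^ m1)) (hd Us2)
      * perm_mat (2 ^ m1 * 2 ^ m2) (swap_index (2 ^ m1) (2 ^ m2)) * last (map (kron (1\<^sub>m (2 ^ m2))) Us1))"
    unfolding last_map[OF A1(1)]
    by (intro unitary_mult u1[OF last_in_set[OF A1(1)]] u2[OF hd_in_set[OF A2(1)]])
  have "unitary (2 ^ (m1 + m2)) U" if "U \<in> set (compose_algs m1 m2 Us1 Us2)" for U
  proof -
    from that consider "U \<in> kron (1\<^sub>m (2 ^ m2)) ` set Us1" | "U \<in> kron (1\<^sub>m (2 ^ m1)) ` set Us2"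
      | "U = kron (1\<^sub>m (2 ^ m1)) (hd Us2) * perm_mat (2 ^ m1 * 2 ^ m2) (swap_index (2 ^ m1) (2 ^ m2))
            * last (map (kron (1\<^sub>m (2 ^ m2))) Us1)"
      unfolding compose_algs_def Let_def map_butlast[symmetric]
      using in_set_butlastD set_tl_subset by fastforce
    thus ?thesis using u1 u2 uJ by cases auto
  qed
  thus "valid_alg n (m1 + m2) (compose_algs m1 m2 Us1 Us2) (S2 \<union> (+) m2 ` S1)"
    unfolding valid_alg_def using A1(2,4) A2(4) by (auto simp: compose_algs_def Let_def)
  show "length (compose_algs m1 m2 Us1 Us2) = length Us1 + length Us2 - 1"
    unfolding compose_algs_def Let_def using A1(1) A2(1) by (cases Us1; cases Us2) auto
qed

lemma evolve_kron_one_final_state: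
  assumes V: "valid_alg n m Us S" and a: "a \<in> carrier_vec (2 ^ mH)"
  shows "evolve n (mH + m) x (tl (map (kron (1\<^sub>m (2 ^ mH))) Us))
      (hd (map (kron (1\<^sub>m (2 ^ mH))) Us) *\<^sub>v vec_kron a (unit_vec (2 ^ m) 0))
    = vec_kron a (final_state n m Us x)"
proof -
  note A = valid_algD[OF V]
  have c: "U \<in> carrier_mat (2 ^ m) (2 ^ m)" if "U \<in> set Us" for U
    using unitaryD(1)[OF A(3)[OF that]] .
  have U0: "hd Us \<in> carrier_mat (2 ^ m) (2 ^ m)" using c hd_in_set[OF A(1)] .
  have hd_eq: "hd (map (kron (1\<^sub>m (2 ^ mH))) Us) *\<^sub>v vec_kron a (unit_vec (2 ^ m) 0)
      = vec_kron a (hd Us *\<^sub>v unit_vec (2 ^ m) 0)"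
    unfolding hd_map[OF A(1)] using kron_mult_vec_kron[OF one_carrier_mat U0 a, of "unit_vec (2 ^ m) 0"] a
    by simp
  have "\<forall>V\<in>set (tl Us). V \<in> carrier_mat (2 ^ m) (2 ^ m)" using c set_tl_subset[of Us] by auto
  moreover have "hd Us *\<^sub>v unit_vec (2 ^ m) 0 \<in> carrier_vec (2 ^ m)" by (rule mult_mat_vec_carrier[OF U0]) simp
  ultimately have "evolve n (mH + m) x (map (kron (1\<^sub>m (2 ^ mH))) (tl Us)) (vec_kron a (hd Us *\<^sub>v unit_vec (2 ^ m) 0))
      = vec_kron a (evolve n m x (tl Us) (hd Us *\<^sub>v unit_vec (2 ^ m) 0))"
    by (rule evolve_kron_one[OF A(2) _ a])
  thus ?thesis unfolding final_state_def map_tl hd_eq .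
qed

lemma swap_then_kron_one:
  assumes V: "V \<in> carrier_mat H2 H2" and \<phi>: "\<phi> \<in> carrier_vec H1" and e: "e \<in> carrier_vec H2"
  shows "(kron (1\<^sub>m H1) V * perm_mat (H1 * H2) (swap_index H1 H2)) *\<^sub>v vec_kron e \<phi>
    = kron (1\<^sub>m H1) V *\<^sub>v vec_kron \<phi> e"
proof -
  have "vec_kron e \<phi> \<in> carrier_vec (H1 * H2)" using vec_kron_carrier[OF e \<phi>] by (simp add: mult.commute)
  thus ?thesis
    using assoc_mult_mat_vec[OF kron_carrier[OF one_carrier_mat V] perm_mat_carrier]
      perm_mat_swap_index_vec_kron[OF \<phi> e] by simp
qed

lemma final_state_compose:
  assumes V1: "valid_alg n m1 Us1 S1" and V2: "valid_alg n m2 Us2 S2"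
  shows "final_state n (m1 + m2) (compose_algs m1 m2 Us1 Us2) x
    = vec_kron (final_state n m1 Us1 x) (final_state n m2 Us2 x)"
proof -
  note A1 = valid_algD[OF V1] and A2 = valid_algD[OF V2]
  define H1 :: nat where "H1 = 2 ^ m1"
  define H2 :: nat where "H2 = 2 ^ m2"
  define Ls where "Ls = map (kron (1\<^sub>m H2)) Us1"
  define Ks where "Ks = map (kron (1\<^sub>m H1)) Us2"
  define J where "J = kron (1\<^sub>m H1) (hd Us2) * perm_mat (H1 * H2) (swap_index H1 H2)"
  define \<phi>1 where "\<phi>1 = final_state n m1 Us1 x"
  have V0: "hd Us2 \<in> carrier_mat H2 H2" using unitaryD(1)[OF A2(3)[OF hd_in_set[OF A2(1)]]] unfolding H2_def .
  have \<phi>1: "\<phi>1 \<in> carrier_vec H1" unfolding \<phi>1_def H1_def by (rule final_state_carrier[OF V1])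
  have e2: "unit_vec H2 0 \<in> carrier_vec H2" by simp
  have HH: "(2::nat) ^ (m1 + m2) = H1 * H2" "H2 * H1 = H1 * H2" unfolding H1_def H2_def by (simp_all add: power_add)
  have J: "J \<in> carrier_mat (2 ^ (m1 + m2)) (2 ^ (m1 + m2))"
    unfolding J_def HH by (rule mult_carrier_mat[OF kron_carrier[OF one_carrier_mat V0] perm_mat_carrier])
  have "kron (1\<^sub>m H2) (last Us1) \<in> carrier_mat (H2 * H1) (H2 * H1)"
    using unitaryD(1)[OF A1(3)[OF last_in_set[OF A1(1)]]] unfolding H1_def by simp
  hence L: "last Ls \<in> carrier_mat (2 ^ (m1 + m2)) (2 ^ (m1 + m2))"
    unfolding Ls_def last_map[OF A1(1)] HH .
  have "final_state n (m1 + m2) (compose_algs m1 m2 Us1 Us2) x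
      = evolve n (m1 + m2) x (tl Ks) (J *\<^sub>v evolve n (m1 + m2) x (tl Ls) (hd Ls *\<^sub>v unit_vec (2 ^ (m1 + m2)) 0))"
    unfolding final_state_def compose_algs_def Let_def J_def Ls_def Ks_def H1_def H2_def map_tl
    by (rule evolve_merge_junction[OF _ J[unfolded J_def H1_def H2_def] L[unfolded Ls_def H2_def]])
      (use A1(1) in simp_all)
  also have "unit_vec (2 ^ (m1 + m2)) 0 = vec_kron (unit_vec H2 0) (unit_vec (2 ^ m1) 0)"
    using unit_vec_mult_eq_vec_kron[of H2 "2 ^ m1"] unfolding H2_def by (simp add: power_add mult.commute)
  also have "evolve n (m1 + m2) x (tl Ls) (hd Ls *\<^sub>v vec_kron (unit_vec H2 0) (unit_vec (2 ^ m1) 0))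
      = vec_kron (unit_vec H2 0) \<phi>1"
    using evolve_kron_one_final_state[OF V1 e2[unfolded H2_def]]
    unfolding Ls_def \<phi>1_def H2_def by (simp add: add.commute)
  also have "J *\<^sub>v vec_kron (unit_vec H2 0) \<phi>1 = hd Ks *\<^sub>v vec_kron \<phi>1 (unit_vec (2 ^ m2) 0)"
    unfolding J_def Ks_def hd_map[OF A2(1)] using swap_then_kron_one[OF V0 \<phi>1 e2] unfolding H2_def .
  also have "evolve n (m1 + m2) x (tl Ks) (hd Ks *\<^sub>v vec_kron \<phi>1 (unit_vec (2 ^ m2) 0))
      = vec_kron \<phi>1 (final_state n m2 Us2 x)"
    unfolding Ks_def H1_def by (rule evolve_kron_one_final_state[OF V2 \<phi>1[unfolded H1_def]])
  finally show ?thesis unfolding \<phi>1_def .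
qed

lemma alg_output_compose:
  assumes V1: "valid_alg n m1 Us1 S1" and V2: "valid_alg n m2 Us2 S2"
  shows "alg_output n (m1 + m2) (compose_algs m1 m2 Us1 Us2) (S2 \<union> (+) m2 ` S1) x
    = kron (alg_output n m1 Us1 S1 x) (alg_output n m2 Us2 S2 x)"
  unfolding alg_output_def final_state_compose[OF V1 V2]
  by (rule partial_trace_vec_kron[OF valid_algD(4)[OF V1] valid_algD(4)[OF V2]
        final_state_carrier[OF V1] final_state_carrier[OF V2]])

lemma trace_dist_kron_ge_one_sixth:
  assumes \<rho>: "unit_trace_hermitian d \<rho>" and \<rho>': "unit_trace_hermitian d \<rho>'"
    and \<sigma>: "unit_trace_hermitian d \<sigma>" and \<sigma>': "unit_trace_hermitian d \<sigma>'"
    and far: "trace_dist \<rho> \<sigma> \<ge> 2/3" and close: "trace_dist \<rho>' \<sigma>' \<le> 1/3"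
  shows "trace_dist (kron \<rho> \<sigma>) (kron \<rho>' \<sigma>') \<ge> 1/6"
proof -
  note R = \<rho>[unfolded unit_trace_hermitian_def] \<rho>'[unfolded unit_trace_hermitian_def]
    \<sigma>[unfolded unit_trace_hermitian_def] \<sigma>'[unfolded unit_trace_hermitian_def]
  have "trace_dist \<rho> \<sigma> \<le> trace_dist \<rho> \<rho>' + trace_dist \<rho>' \<sigma>"
    using trace_dist_triangle R by blast
  also have "trace_dist \<rho>' \<sigma> \<le> trace_dist \<rho>' \<sigma>' + trace_dist \<sigma>' \<sigma>"
    using trace_dist_triangle R by blast
  finally have "trace_dist \<rho> \<sigma> \<le> trace_dist \<rho> \<rho>' + trace_dist \<rho>' \<sigma>' + trace_dist \<sigma> \<sigma>'"
    using trace_dist_commute[of \<sigma>' d \<sigma>] R by simp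
  moreover have "trace_dist \<rho> \<rho>' \<le> trace_dist (kron \<rho> \<sigma>) (kron \<rho>' \<sigma>')"
    using trace_dist_le_kron_left R by blast
  moreover have "trace_dist \<sigma> \<sigma>' \<le> trace_dist (kron \<rho> \<sigma>) (kron \<rho>' \<sigma>')"
    using trace_dist_le_kron_right R by blast
  ultimately show ?thesis using far close by linarith
qed

lemma QSZK_ach_imp_QS_ach:
  assumes "QSZK_ach n D f k"
  shows "QS_ach n D f k"
proof -
  obtain m1 Us1 S1 m2 Us2 S2 where V1: "valid_alg n m1 Us1 S1" and V2: "valid_alg n m2 Us2 S2"
    and len: "(length Us1 - 1) + (length Us2 - 1) = k"
    and dim: "\<forall>x\<in>D. dim_row (alg_output n m1 Us1 S1 x) = dim_row (alg_output n m2 Us2 S2 x)"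
    and yes: "\<forall>x\<in>D. f x \<longrightarrow> trace_dist (alg_output n m1 Us1 S1 x) (alg_output n m2 Us2 S2 x) \<ge> 2/3"
    and no: "\<forall>x\<in>D. \<not> f x \<longrightarrow> trace_dist (alg_output n m1 Us1 S1 x) (alg_output n m2 Us2 S2 x) \<le> 1/3"
    using assms unfolding QSZK_ach_def by blast
  define \<rho> where "\<rho> = alg_output n m1 Us1 S1"
  define \<sigma> where "\<sigma> = alg_output n m2 Us2 S2"
  define d1 :: nat where "d1 = 2 ^ length (kept_qubits m1 S1)"
  define d2 :: nat where "d2 = 2 ^ length (kept_qubits m2 S2)"
  note R = unit_trace_hermitian_alg_output[OF V1, folded \<rho>_def d1_def]
  note S = unit_trace_hermitian_alg_output[OF V2, folded \<sigma>_def d2_def]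
  have sep: "trace_dist (kron (\<rho> x) (\<sigma> x)) (kron (\<rho> y) (\<sigma> y)) \<ge> 1/6"
    if "x \<in> D" "y \<in> D" "f x" "\<not> f y" for x y
  proof -
    have "d1 = d2" using dim that R[of x] S[of x] unfolding \<rho>_def[symmetric] \<sigma>_def[symmetric]
      by (auto simp: unit_trace_hermitian_def)
    thus ?thesis using trace_dist_kron_ge_one_sixth[OF R R S[folded \<open>d1 = d2\<close>] S[folded \<open>d1 = d2\<close>]]
        yes no that unfolding \<rho>_def \<sigma>_def by blast
  qed
  show ?thesis unfolding QS_ach_def
  proof (intro exI conjI)
    show "valid_alg n (m1 + m2) (compose_algs m1 m2 Us1 Us2) (S2 \<union> (+) m2 ` S1)"
      by (rule valid_alg_compose(1)[OF V1 V2])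
    show "length (compose_algs m1 m2 Us1 Us2) = k + 1"
      using valid_alg_compose(2)[OF V1 V2] len valid_algD(1)[OF V1] valid_algD(1)[OF V2]
      by (cases Us1; cases Us2) auto
    have "kron (\<rho> x) (\<sigma> x) \<in> carrier_mat (d1 * d2) (d1 * d2)" for x
      using R S unfolding unit_trace_hermitian_def by simp
    thus "\<forall>x\<in>D. \<forall>y\<in>D. f x \<noteq> f y \<longrightarrow> 1 / 6 \<le> trace_dist
        (alg_output n (m1 + m2) (compose_algs m1 m2 Us1 Us2) (S2 \<union> (+) m2 ` S1) x)
        (alg_output n (m1 + m2) (compose_algs m1 m2 Us1 Us2) (S2 \<union> (+) m2 ` S1) y)"
      unfolding alg_output_compose[OF V1 V2, folded \<rho>_def \<sigma>_def]
      using sep trace_dist_commute by metis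
  qed
qed

theorem theorem2:
  fixes n :: nat and D :: "bool list set" and f :: "bool list \<Rightarrow> bool"
  assumes "\<forall>x\<in>D. length x = n"
  shows "QS n D f \<le> QSZK n D f"
  unfolding QS_def QSZK_def using QSZK_ach_imp_QS_ach by (blast intro: Inf_superset_mono)

end
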